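(* If $E$ is an operator space such that $E'$ has the $C$-W*CBAP, then $E$ has the $C$-W*CBAP.
   Context: An operator space $X$ has the $C$-W*CBAP if there is a net of finite-rank maps $\phi_i:X\to X''$ with $\|\phi_i\|_{cb}\le C$ for all $i$ and $\phi_i(x)\to\kappa_X(x)$ in the weak$^*$ topology for every $x\in X$, where $\kappa_X:X\to X''$ is the canonical embedding; $E'$ carries the standard dual operator space structure. *)

theory Defs
  imports "HOL-Analysis.Analysis"
begin

text \<open>An operator space is given by a carrier set with complex vector space
operations together with norms on the n x n matrices over it
(matrices are functions nat => nat => 'a, only entries with indices below n matter).\<close>

record 'a opsp =
  os_carrier :: "'a set"
  os_zero :: 'a
  os_add :: "'a \<Rightarrow> 'a \<Rightarrow> 'a"
  os_smul :: "complex \<Rightarrow> 'a \<Rightarrow> 'a"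
  os_mnorm :: "nat \<Rightarrow> (nat \<Rightarrow> nat \<Rightarrow> 'a) \<Rightarrow> real"

primrec vsumN :: "'a opsp \<Rightarrow> (nat \<Rightarrow> 'a) \<Rightarrow> nat \<Rightarrow> 'a" where
  "vsumN V f 0 = os_zero V"
| "vsumN V f (Suc n) = os_add V (vsumN V f n) (f n)"

definition lincomb :: "'a opsp \<Rightarrow> complex list \<Rightarrow> 'a list \<Rightarrow> 'a" where
  "lincomb V cs bs = vsumN V (\<lambda>k. os_smul V (cs ! k) (bs ! k)) (length bs)"

definition vector_space_on :: "'a opsp \<Rightarrow> bool" where
  "vector_space_on V \<longleftrightarrow>
     (let C = os_carrier V; ad = os_add V; sm = os_smul V; z = os_zero V in
      z \<in> C \<and> (\<forall>x\<in>C. \<forall>y\<in>C. ad x y \<in> C) \<and> (\<forall>c. \<forall>x\<in>C. sm c x \<in> C) \<and>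
      (\<forall>x\<in>C. \<forall>y\<in>C. \<forall>w\<in>C. ad (ad x y) w = ad x (ad y w)) \<and>
      (\<forall>x\<in>C. \<forall>y\<in>C. ad x y = ad y x) \<and>
      (\<forall>x\<in>C. ad z x = x) \<and>
      (\<forall>x\<in>C. \<exists>y\<in>C. ad x y = z) \<and>
      (\<forall>c. \<forall>x\<in>C. \<forall>y\<in>C. sm c (ad x y) = ad (sm c x) (sm c y)) \<and>
      (\<forall>c d. \<forall>x\<in>C. sm (c + d) x = ad (sm c x) (sm d x)) \<and>
      (\<forall>c d. \<forall>x\<in>C. sm (c * d) x = sm c (sm d x)) \<and>
      (\<forall>x\<in>C. sm 1 x = x))"

definition mat_in :: "'a opsp \<Rightarrow> nat \<Rightarrow> (nat \<Rightarrow> nat \<Rightarrow> 'a) \<Rightarrow> bool" where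
  "mat_in V n X \<longleftrightarrow> (\<forall>i<n. \<forall>j<n. X i j \<in> os_carrier V)"

definition cmat_norm :: "nat \<Rightarrow> nat \<Rightarrow> (nat \<Rightarrow> nat \<Rightarrow> complex) \<Rightarrow> real" where
  "cmat_norm r c A = Sup (insert 0
     {sqrt (\<Sum>i<r. (cmod (\<Sum>j<c. A i j * v j))\<^sup>2) | v. (\<Sum>j<c. (cmod (v j))\<^sup>2) \<le> 1})"

definition block_diag :: "'a opsp \<Rightarrow> nat \<Rightarrow> (nat \<Rightarrow> nat \<Rightarrow> 'a) \<Rightarrow> (nat \<Rightarrow> nat \<Rightarrow> 'a) \<Rightarrow> nat \<Rightarrow> nat \<Rightarrow> 'a" where
  "block_diag V n X Y = (\<lambda>i j. if i < n \<and> j < n then X i j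
                             else if n \<le> i \<and> n \<le> j then Y (i - n) (j - n) else os_zero V)"

definition mtriple :: "'a opsp \<Rightarrow> nat \<Rightarrow> (nat \<Rightarrow> nat \<Rightarrow> complex) \<Rightarrow> (nat \<Rightarrow> nat \<Rightarrow> 'a)
                        \<Rightarrow> (nat \<Rightarrow> nat \<Rightarrow> complex) \<Rightarrow> nat \<Rightarrow> nat \<Rightarrow> 'a" where
  "mtriple V m \<alpha> X \<beta> = (\<lambda>i j. vsumN V (\<lambda>k. vsumN V (\<lambda>l. os_smul V (\<alpha> i k * \<beta> l j) (X k l)) m) m)"

definition operator_space :: "'a opsp \<Rightarrow> bool" where
  "operator_space V \<longleftrightarrow>
     vector_space_on V \<and>
     (\<forall>n X Y. (\<forall>i<n. \<forall>j<n. X i j = Y i j) \<longrightarrow> os_mnorm V n X = os_mnorm V n Y) \<and>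
     (\<forall>n X. mat_in V n X \<longrightarrow> 0 \<le> os_mnorm V n X) \<and>
     (\<forall>n X. mat_in V n X \<longrightarrow> (os_mnorm V n X = 0 \<longleftrightarrow> (\<forall>i<n. \<forall>j<n. X i j = os_zero V))) \<and>
     (\<forall>n X Y. mat_in V n X \<and> mat_in V n Y \<longrightarrow>
        os_mnorm V n (\<lambda>i j. os_add V (X i j) (Y i j)) \<le> os_mnorm V n X + os_mnorm V n Y) \<and>
     (\<forall>n c X. mat_in V n X \<longrightarrow>
        os_mnorm V n (\<lambda>i j. os_smul V c (X i j)) = cmod c * os_mnorm V n X) \<and>
     (\<forall>n m X Y. mat_in V n X \<and> mat_in V m Y \<longrightarrow>
        os_mnorm V (n + m) (block_diag V n X Y) = max (os_mnorm V n X) (os_mnorm V m Y)) \<and>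
     (\<forall>n m \<alpha> X \<beta>. mat_in V m X \<longrightarrow>
        os_mnorm V n (mtriple V m \<alpha> X \<beta>) \<le> cmat_norm n m \<alpha> * os_mnorm V m X * cmat_norm m n \<beta>)"

definition lin_fun :: "'a opsp \<Rightarrow> ('a \<Rightarrow> complex) \<Rightarrow> bool" where
  "lin_fun V f \<longleftrightarrow> (\<forall>x\<in>os_carrier V. \<forall>y\<in>os_carrier V. f (os_add V x y) = f x + f y) \<and>
                   (\<forall>c. \<forall>x\<in>os_carrier V. f (os_smul V c x) = c * f x)"

definition dual_carrier :: "'a opsp \<Rightarrow> ('a \<Rightarrow> complex) set" where
  "dual_carrier V = {f. lin_fun V f \<and>
      (\<exists>K. \<forall>x\<in>os_carrier V. cmod (f x) \<le> K * os_mnorm V 1 (\<lambda>_ _. x)) \<and>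
      (\<forall>x. x \<notin> os_carrier V \<longrightarrow> f x = 0)}"

text \<open>M_n(V') = CB(V, M_n) isometrically: the norm of [f_ij] is the cb norm of
 x |-> [f_ij(x)], computed via M_n(M_m) = M_(nm).\<close>
definition dual_mnorm :: "'a opsp \<Rightarrow> nat \<Rightarrow> (nat \<Rightarrow> nat \<Rightarrow> ('a \<Rightarrow> complex)) \<Rightarrow> real" where
  "dual_mnorm V n F = Sup (insert 0
     {cmat_norm (n * m) (n * m) (\<lambda>p q. F (p div m) (q div m) (X (p mod m) (q mod m))) | m X.
        0 < m \<and> mat_in V m X \<and> os_mnorm V m X \<le> 1})"

definition dual :: "'a opsp \<Rightarrow> ('a \<Rightarrow> complex) opsp" where
  "dual V = \<lparr> os_carrier = dual_carrier V, os_zero = (\<lambda>_. 0),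
              os_add = (\<lambda>f g x. f x + g x), os_smul = (\<lambda>c f x. c * f x),
              os_mnorm = dual_mnorm V \<rparr>"

definition kappa :: "'a opsp \<Rightarrow> 'a \<Rightarrow> ('a \<Rightarrow> complex) \<Rightarrow> complex" where
  "kappa V x = (\<lambda>f. if f \<in> dual_carrier V then f x else 0)"

definition lin_map :: "'a opsp \<Rightarrow> 'b opsp \<Rightarrow> ('a \<Rightarrow> 'b) \<Rightarrow> bool" where
  "lin_map V W \<phi> \<longleftrightarrow> (\<forall>x\<in>os_carrier V. \<phi> x \<in> os_carrier W) \<and>
     (\<forall>x\<in>os_carrier V. \<forall>y\<in>os_carrier V. \<phi> (os_add V x y) = os_add W (\<phi> x) (\<phi> y)) \<and>
     (\<forall>c. \<forall>x\<in>os_carrier V. \<phi> (os_smul V c x) = os_smul W c (\<phi> x))"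

definition cb_le :: "'a opsp \<Rightarrow> 'b opsp \<Rightarrow> real \<Rightarrow> ('a \<Rightarrow> 'b) \<Rightarrow> bool" where
  "cb_le V W C \<phi> \<longleftrightarrow> (\<forall>n X. mat_in V n X \<longrightarrow>
      os_mnorm W n (\<lambda>i j. \<phi> (X i j)) \<le> C * os_mnorm V n X)"

definition finite_rank :: "'a opsp \<Rightarrow> 'b opsp \<Rightarrow> ('a \<Rightarrow> 'b) \<Rightarrow> bool" where
  "finite_rank V W \<phi> \<longleftrightarrow> (\<exists>bs. set bs \<subseteq> os_carrier W \<and>
      (\<forall>x\<in>os_carrier V. \<exists>cs. length cs = length bs \<and> \<phi> x = lincomb W cs bs))"

text \<open>C-W*CBAP: a net (here: a proper filter on the maps) of finite-rank maps
 V -> V'' with cb norm at most C converging weak* pointwise to the canonical embedding.\<close>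
definition W_CBAP :: "'a opsp \<Rightarrow> real \<Rightarrow> bool" where
  "W_CBAP V C \<longleftrightarrow> (\<exists>F :: ('a \<Rightarrow> (('a \<Rightarrow> complex) \<Rightarrow> complex)) filter. F \<noteq> bot \<and>
     (\<forall>\<^sub>F \<phi> in F. lin_map V (dual (dual V)) \<phi> \<and> finite_rank V (dual (dual V)) \<phi> \<and>
                  cb_le V (dual (dual V)) C \<phi>) \<and>
     (\<forall>x\<in>os_carrier V. \<forall>f\<in>dual_carrier V. ((\<lambda>\<phi>. \<phi> x f) \<longlongrightarrow> kappa V x f) F))"

end

theory Submission
  imports Defs
begin

text \<open>Let \<open>\<psi>\<^sub>i : E' \<rightarrow> E'''\<close> witness the C-W*CBAP of \<open>E'\<close>. For \<open>E\<close> take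
  \<open>\<phi>\<^sub>i x = (f \<mapsto> \<psi>\<^sub>i f (\<kappa> x))\<close>, the adjoint of \<open>\<psi>\<^sub>i\<close> restricted to \<open>E''\<close> and composed with the
  canonical embedding \<open>\<kappa> : E \<rightarrow> E''\<close>. Then \<open>\<phi>\<^sub>i x f = \<psi>\<^sub>i f (\<kappa> x)\<close> converges to
  \<open>(\<kappa> x) f = f x\<close>, which is the weak* convergence. Finite rank survives, because finitely many
  functionals on \<open>E''\<close> see \<open>E''\<close> only through a finite-dimensional quotient. For the cb bound,
  the matrix \<open>[\<phi>\<^sub>i (x\<^sub>k\<^sub>l) (f\<^sub>p\<^sub>q)]\<close> pairing \<open>M\<^sub>n(E)\<close> with \<open>M\<^sub>m(E')\<close> is a row and column
  permutation of the matrix pairing \<open>[\<psi>\<^sub>i f\<^sub>p\<^sub>q] \<in> M\<^sub>m(E''')\<close> with \<open>[\<kappa> x\<^sub>k\<^sub>l] \<in> M\<^sub>n(E'')\<close>, so its norm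
  is at most \<open>C \<parallel>[f\<^sub>p\<^sub>q]\<parallel> \<parallel>[x\<^sub>k\<^sub>l]\<parallel>\<close>, as \<open>\<kappa>\<close> is completely contractive. Hahn-Banach is needed
  only to rule out \<open>C < 0\<close> when \<open>E \<noteq> 0\<close>.\<close>

section \<open>Operator norms of scalar matrices\<close>

definition vec_norm :: "(nat \<Rightarrow> complex) \<Rightarrow> nat \<Rightarrow> real" where
  "vec_norm v c = L2_set (\<lambda>j. cmod (v j)) {..<c}"

definition mat_vec :: "(nat \<Rightarrow> nat \<Rightarrow> complex) \<Rightarrow> nat \<Rightarrow> (nat \<Rightarrow> complex) \<Rightarrow> nat \<Rightarrow> complex" where
  "mat_vec A c v = (\<lambda>i. \<Sum>j<c. A i j * v j)"

definition mat_form :: "nat \<Rightarrow> nat \<Rightarrow> (nat \<Rightarrow> nat \<Rightarrow> complex) \<Rightarrow>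
    (nat \<Rightarrow> complex) \<Rightarrow> (nat \<Rightarrow> complex) \<Rightarrow> complex" where
  "mat_form r c A u v = (\<Sum>i<r. cnj (u i) * mat_vec A c v i)"

lemma vec_norm_nonneg[simp]: "0 \<le> vec_norm v c" by (simp add: vec_norm_def)

lemma cmat_norm_eq_Sup:
  "cmat_norm r c A = Sup (insert 0 {vec_norm (mat_vec A c v) r | v. vec_norm v c \<le> 1})"
proof -
  have "{sqrt (\<Sum>i<r. (cmod (\<Sum>j<c. A i j * v j))\<^sup>2) | v. (\<Sum>j<c. (cmod (v j))\<^sup>2) \<le> 1}
      = {vec_norm (mat_vec A c v) r | v. vec_norm v c \<le> 1}"
    by (simp add: vec_norm_def mat_vec_def L2_set_def)
  then show ?thesis by (simp add: cmat_norm_def)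
qed

lemma norm_mat_vec_le:
  assumes "vec_norm v c \<le> 1"
  shows "cmod (mat_vec A c v i) \<le> (\<Sum>j<c. cmod (A i j))"
proof -
  have vj: "cmod (v j) \<le> 1" if "j < c" for j
  proof -
    have "cmod (v j) \<le> vec_norm v c" unfolding vec_norm_def
      by (rule member_le_L2_set) (use that in auto)
    then show ?thesis using assms by simp
  qed
  have "cmod (mat_vec A c v i) \<le> (\<Sum>j<c. cmod (A i j * v j))" unfolding mat_vec_def
    by (rule norm_sum)
  also have "\<dots> \<le> (\<Sum>j<c. cmod (A i j))"
    by (rule sum_mono) (auto simp: norm_mult intro: mult_left_le[OF vj])
  finally show ?thesis .
qed

lemma cmat_norm_set_bdd:
  "bdd_above (insert 0 {vec_norm (mat_vec A c v) r | v. vec_norm v c \<le> 1})"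
proof -
  have "x \<le> (\<Sum>i<r. \<Sum>j<c. cmod (A i j))"
      if xin: "x \<in> {vec_norm (mat_vec A c v) r | v. vec_norm v c \<le> 1}" for x
  proof -
    obtain v where x: "x = vec_norm (mat_vec A c v) r" and v: "vec_norm v c \<le> 1" using xin
      by blast
    have "x \<le> (\<Sum>i<r. \<bar>cmod (mat_vec A c v i)\<bar>)" unfolding x vec_norm_def
      by (rule L2_set_le_sum_abs)
    also have "\<dots> \<le> (\<Sum>i<r. \<Sum>j<c. cmod (A i j))"
      by (rule sum_mono) (use norm_mat_vec_le[OF v] in auto)
    finally show ?thesis .
  qed
  moreover have "0 \<le> (\<Sum>i<r. \<Sum>j<c. cmod (A i j))" by (auto intro!: sum_nonneg)
  ultimately show ?thesis unfolding bdd_above_def by blast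
qed

lemma cmat_norm_nonneg[simp]: "0 \<le> cmat_norm r c A"
  unfolding cmat_norm_eq_Sup by (rule cSup_upper[OF _ cmat_norm_set_bdd]) auto

lemma cmat_norm_ge_unit:
  "vec_norm v c \<le> 1 \<Longrightarrow> vec_norm (mat_vec A c v) r \<le> cmat_norm r c A"
  unfolding cmat_norm_eq_Sup by (rule cSup_upper[OF _ cmat_norm_set_bdd]) auto

lemma cmat_norm_le_unit:
  "0 \<le> M \<Longrightarrow> (\<And>v. vec_norm v c \<le> 1 \<Longrightarrow> vec_norm (mat_vec A c v) r \<le> M) \<Longrightarrow> cmat_norm r c A \<le> M"
  unfolding cmat_norm_eq_Sup by (rule cSup_least) auto

lemma vec_norm_scale: "vec_norm (\<lambda>j. a * v j) c = cmod a * vec_norm v c"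
  by (simp add: vec_norm_def norm_mult L2_set_right_distrib)

lemma mat_vec_scale: "mat_vec A c (\<lambda>j. a * v j) = (\<lambda>i. a * mat_vec A c v i)"
  by (simp add: mat_vec_def sum_distrib_left algebra_simps)

lemma vec_norm_eq_0D: "vec_norm v c = 0 \<Longrightarrow> j < c \<Longrightarrow> v j = 0"
  unfolding vec_norm_def by (subst (asm) L2_set_eq_0_iff) auto

lemma mat_vec_zero:
  "(\<And>j. j < c \<Longrightarrow> v j = 0) \<Longrightarrow> mat_vec A c v i = 0"
  by (simp add: mat_vec_def)

lemma vec_norm_cong:
  "(\<And>j. j < c \<Longrightarrow> v j = w j) \<Longrightarrow> vec_norm v c = vec_norm w c"
  unfolding vec_norm_def by (rule L2_set_cong) auto

lemma vec_norm_mat_vec_le: "vec_norm (mat_vec A c v) r \<le> cmat_norm r c A * vec_norm v c"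
proof (cases "vec_norm v c = 0")
  case True
  then have "vec_norm (mat_vec A c v) r = vec_norm (\<lambda>_. 0) r"
    by (intro vec_norm_cong mat_vec_zero) (auto intro: vec_norm_eq_0D)
  then show ?thesis using True by (simp add: vec_norm_def L2_set_0')
next
  case False
  then have pos: "vec_norm v c > 0" using vec_norm_nonneg[of v c] by linarith
  define a where "a = complex_of_real (1 / vec_norm v c)"
  have ca: "cmod a = 1 / vec_norm v c" using pos unfolding a_def norm_of_real by simp
  have "vec_norm (\<lambda>j. a * v j) c \<le> 1" using pos by (simp add: vec_norm_scale ca)
  then have "vec_norm (mat_vec A c (\<lambda>j. a * v j)) r \<le> cmat_norm r c A"
    by (rule cmat_norm_ge_unit)
  then have "vec_norm (mat_vec A c v) r / vec_norm v c \<le> cmat_norm r c A"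
    by (simp add: mat_vec_scale vec_norm_scale ca)
  then show ?thesis using pos by (simp add: divide_le_eq mult.commute)
qed

lemma norm_inner_le_vec_norm: "cmod (\<Sum>i<r. cnj (u i) * w i) \<le> vec_norm u r * vec_norm w r"
proof -
  have "cmod (\<Sum>i<r. cnj (u i) * w i) \<le> (\<Sum>i<r. cmod (cnj (u i) * w i))"
    by (rule norm_sum)
  also have "\<dots> = (\<Sum>i<r. \<bar>cmod (u i)\<bar> * \<bar>cmod (w i)\<bar>)"
    by (simp add: norm_mult)
  also have "\<dots> \<le> vec_norm u r * vec_norm w r" unfolding vec_norm_def
    by (rule L2_set_mult_ineq)
  finally show ?thesis .
qed

lemma norm_mat_form_le:
  "cmod (mat_form r c A u v) \<le> cmat_norm r c A * vec_norm u r * vec_norm v c"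
proof -
  have "cmod (mat_form r c A u v) \<le> vec_norm u r * vec_norm (mat_vec A c v) r"
    unfolding mat_form_def by (rule norm_inner_le_vec_norm)
  also have "\<dots> \<le> vec_norm u r * (cmat_norm r c A * vec_norm v c)"
    by (rule mult_left_mono[OF vec_norm_mat_vec_le]) simp
  finally show ?thesis by (simp add: algebra_simps)
qed

lemma vec_norm_squared: "(vec_norm w r)\<^sup>2 = (\<Sum>i<r. cnj (w i) * w i)"
proof -
  have "(vec_norm w r)\<^sup>2 = (\<Sum>i<r. (cmod (w i))\<^sup>2)"
    unfolding vec_norm_def L2_set_def
    by (simp add: sum_nonneg)
  also have "complex_of_real \<dots> = (\<Sum>i<r. complex_of_real ((cmod (w i))\<^sup>2))"
    by (simp only: of_real_sum)
  also have "\<dots> = (\<Sum>i<r. cnj (w i) * w i)"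
    by (rule sum.cong) (auto simp: complex_norm_square mult.commute simp del: of_real_power)
  finally show ?thesis .
qed

lemma cmat_norm_le_form:
  assumes M: "0 \<le> M" and H: "\<And>u v. cmod (mat_form r c A u v) \<le> M * vec_norm u r * vec_norm v c"
  shows "cmat_norm r c A \<le> M"
proof (rule cmat_norm_le_unit[OF M])
  fix v assume v: "vec_norm v c \<le> 1"
  let ?w = "mat_vec A c v"
  have "(vec_norm ?w r)\<^sup>2 = cmod (mat_form r c A ?w v)"
    using vec_norm_squared[of ?w r] unfolding mat_form_def
    by (metis norm_of_real abs_of_nonneg zero_le_power2 vec_norm_nonneg)
  also have "\<dots> \<le> M * vec_norm ?w r * vec_norm v c" by (rule H)
  also have "\<dots> \<le> M * vec_norm ?w r" using v M by (simp add: mult_left_le)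
  finally have "vec_norm ?w r * vec_norm ?w r \<le> M * vec_norm ?w r"
    by (simp add: power2_eq_square)
  then show "vec_norm ?w r \<le> M"
  proof (cases "vec_norm ?w r = 0")
    case True then show ?thesis using M by simp
  next
    case False then have "0 < vec_norm ?w r" using vec_norm_nonneg[of ?w r] by linarith
    then show ?thesis
      using mult_right_le_imp_le[of "vec_norm ?w r" "vec_norm ?w r" M]
        \<open>vec_norm ?w r * vec_norm ?w r \<le> M * vec_norm ?w r\<close>
        by blast
  qed
qed

lemma cmat_norm_cong:
  "(\<And>i j. i < r \<Longrightarrow> j < c \<Longrightarrow> A i j = B i j) \<Longrightarrow> cmat_norm r c A = cmat_norm r c B"
proof -
  assume H: "\<And>i j. i < r \<Longrightarrow> j < c \<Longrightarrow> A i j = B i j"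
  have "mat_vec A c v i = mat_vec B c v i" if "i < r" for v i using H that
    by (simp add: mat_vec_def)
  then have "vec_norm (mat_vec A c v) r = vec_norm (mat_vec B c v) r" for v
    by (intro vec_norm_cong) auto
  then show ?thesis unfolding cmat_norm_eq_Sup by simp
qed

lemma mat_form_scale: "mat_form r c (\<lambda>i j. a * A i j) u v = a * mat_form r c A u v"
  by (simp add: mat_form_def mat_vec_def sum_distrib_left algebra_simps)

lemma cmat_norm_zero: "cmat_norm r c (\<lambda>_ _. 0) = 0"
  using cmat_norm_le_form[of 0 r c "\<lambda>_ _. 0"] cmat_norm_nonneg[of r c "\<lambda>_ _. 0"]
  by (simp add: mat_form_def mat_vec_def)

lemma cmat_norm_scale: "cmat_norm r c (\<lambda>i j. a * A i j) = cmod a * cmat_norm r c A"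
proof (cases "a = 0")
  case True then show ?thesis using cmat_norm_zero by simp
next
  case False
  have le1: "cmat_norm r c (\<lambda>i j. b * B i j) \<le> cmod b * cmat_norm r c B" for b B
    by (rule cmat_norm_le_form)
      (auto simp: mat_form_scale norm_mult mult.assoc
      intro: mult_left_mono[OF order.trans[OF norm_mat_form_le], simplified mult.assoc])
  have ia: "\<And>x. inverse a * (a * x) = x" using False by (simp add: mult.assoc[symmetric])
  have "cmat_norm r c A = cmat_norm r c (\<lambda>i j. inverse a * (a * A i j))" by (simp only: ia)
  also have "\<dots> \<le> cmod (inverse a) * cmat_norm r c (\<lambda>i j. a * A i j)" by (rule le1)
  finally have "cmat_norm r c A \<le> cmod (inverse a) * cmat_norm r c (\<lambda>i j. a * A i j)" .
  then have "cmod a * cmat_norm r c A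
      \<le> cmod a * (cmod (inverse a) * cmat_norm r c (\<lambda>i j. a * A i j))"
    by (rule mult_left_mono) simp
  then have "cmod a * cmat_norm r c A \<le> cmat_norm r c (\<lambda>i j. a * A i j)"
    using False by (simp add: norm_inverse mult.assoc[symmetric])
  with le1[of a A] show ?thesis by linarith
qed

lemma div_less_of_less_mult: "p < n*m \<Longrightarrow> p div m < (n::nat)"
  by (cases "m = 0") (auto simp: div_less_iff_less_mult)

lemma sum_lessThan_mult: "(\<Sum>p<n * m. g p) = (\<Sum>i<n. \<Sum>k<(m::nat). g (i * m + k))"
  by (simp add: sum_mult_product add.commute)

lemma cmat_norm_permute_le:
  assumes bij: "bij_betw \<sigma> {..<r} {..<r}"
  shows "cmat_norm r r (\<lambda>p q. A (\<sigma> p) (\<sigma> q)) \<le> cmat_norm r r A"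
proof (rule cmat_norm_le_form[OF cmat_norm_nonneg])
  fix u v
  define \<tau> where "\<tau> = the_inv_into {..<r} \<sigma>"
  have tau: "\<tau> (\<sigma> q) = q" if "q < r" for q
    unfolding \<tau>_def using bij that by (simp add: bij_betw_def the_inv_into_f_f)
  have re: "(\<Sum>q<r. g (\<sigma> q)) = (\<Sum>q<r. g q)" for g :: "nat \<Rightarrow> 'b::comm_monoid_add"
    using sum.reindex_bij_betw[OF bij, of g] by simp
  have "mat_form r r (\<lambda>p q. A (\<sigma> p) (\<sigma> q)) u v = (\<Sum>p<r. cnj (u p) * (\<Sum>q<r. A (\<sigma> p) (\<sigma> q) * v q))"
    by (simp add: mat_form_def mat_vec_def)
  also have "\<dots> = (\<Sum>p<r. cnj (u (\<tau> (\<sigma> p))) * (\<Sum>q<r. A (\<sigma> p) (\<sigma> q) * v (\<tau> (\<sigma> q))))"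
    by (intro sum.cong refl arg_cong2[where f="(*)"]) (auto simp: tau)
  also have "\<dots> = (\<Sum>p<r. cnj (u (\<tau> (\<sigma> p))) * (\<Sum>q<r. A (\<sigma> p) q * v (\<tau> q)))"
    by (subst re[of "\<lambda>q. A _ q * v (\<tau> q)"]) simp
  also have "\<dots> = mat_form r r A (\<lambda>p. u (\<tau> p)) (\<lambda>q. v (\<tau> q))"
    using re[of "\<lambda>p. cnj (u (\<tau> p)) * (\<Sum>q<r. A p q * v (\<tau> q))"]
    by (simp add: mat_form_def mat_vec_def)
  finally have eq: "mat_form r r (\<lambda>p q. A (\<sigma> p) (\<sigma> q)) u v
      = mat_form r r A (\<lambda>p. u (\<tau> p)) (\<lambda>q. v (\<tau> q))" .
  have nr: "vec_norm (\<lambda>p. w (\<tau> p)) r = vec_norm w r" for w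
  proof -
    have "vec_norm (\<lambda>p. w (\<tau> p)) r = sqrt (\<Sum>p<r. (cmod (w (\<tau> p)))\<^sup>2)"
      by (simp add: vec_norm_def L2_set_def)
    also have "(\<Sum>p<r. (cmod (w (\<tau> p)))\<^sup>2) = (\<Sum>p<r. (cmod (w (\<tau> (\<sigma> p))))\<^sup>2)"
      using re[of "\<lambda>p. (cmod (w (\<tau> p)))\<^sup>2"] by simp
    also have "\<dots> = (\<Sum>p<r. (cmod (w p))\<^sup>2)" by (rule sum.cong) (auto simp: tau)
    finally show ?thesis by (simp add: vec_norm_def L2_set_def)
  qed
  show "cmod (mat_form r r (\<lambda>p q. A (\<sigma> p) (\<sigma> q)) u v)
      \<le> cmat_norm r r A * vec_norm u r * vec_norm v r"
    using norm_mat_form_le[of r r A "\<lambda>p. u (\<tau> p)" "\<lambda>q. v (\<tau> q)"]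
    by (simp add: eq nr)
qed

lemma cmat_norm_permute:
  assumes bij: "bij_betw \<sigma> {..<r} {..<r}"
  shows "cmat_norm r r (\<lambda>p q. A (\<sigma> p) (\<sigma> q)) = cmat_norm r r A"
proof -
  define \<tau> where "\<tau> = the_inv_into {..<r} \<sigma>"
  have bt: "bij_betw \<tau> {..<r} {..<r}" unfolding \<tau>_def
    by (rule bij_betw_the_inv_into[OF bij])
  have st: "\<sigma> (\<tau> q) = q" if "q < r" for q
    unfolding \<tau>_def using bij that by (simp add: f_the_inv_into_f_bij_betw)
  have "cmat_norm r r A = cmat_norm r r (\<lambda>p q. (\<lambda>p q. A (\<sigma> p) (\<sigma> q)) (\<tau> p) (\<tau> q))"
    by (rule cmat_norm_cong) (simp add: st)
  also have "\<dots> \<le> cmat_norm r r (\<lambda>p q. A (\<sigma> p) (\<sigma> q))"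
    by (rule cmat_norm_permute_le[OF bt])
  finally show ?thesis using cmat_norm_permute_le[OF bij, of A] by linarith
qed

lemma cmat_norm_swap_blocks:
  "cmat_norm (n*m) (n*m) (\<lambda>p q. G (p div m) (q div m) (p mod m) (q mod m))
 = cmat_norm (m*n) (m*n) (\<lambda>p q. G (p mod n) (q mod n) (p div n) (q div n))"
proof -
  define \<sigma> where "\<sigma> p = (p mod m) * n + p div m" for p
  have inj: "inj_on \<sigma> {..<n*m}"
  proof (rule inj_onI)
    fix p q assume p: "p \<in> {..<n*m}" and q: "q \<in> {..<n*m}" and e: "\<sigma> p = \<sigma> q"
    have pd: "p div m < n" using p by (simp add: div_less_of_less_mult)
    have qd: "q div m < n" using q by (simp add: div_less_of_less_mult)
    have m: "0 < m" using p by (cases m) auto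
    have "(\<sigma> p) div n = (\<sigma> q) div n" "(\<sigma> p) mod n = (\<sigma> q) mod n" using e
      by simp_all
    then have "p div m = q div m" "p mod m = q mod m" unfolding \<sigma>_def using pd qd m
      by simp_all
    then show "p = q" by (metis div_mult_mod_eq)
  qed
  have img: "\<sigma> ` {..<n*m} \<subseteq> {..<n*m}"
  proof clarsimp
    fix p assume p: "p < n*m"
    then have m: "0 < m" by (cases m) auto
    have pd: "p div m < n" using p by (simp add: div_less_of_less_mult)
    have "p mod m < m" using m by simp
    then have "(p mod m)*n + p div m < (p mod m)*n + n" using pd by simp
    also have "\<dots> = (p mod m + 1) * n" by simp
    also have "\<dots> \<le> m * n" using \<open>p mod m < m\<close> by (intro mult_right_mono) auto
    finally show "\<sigma> p < n*m" by (simp add: \<sigma>_def mult.commute)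
  qed
  have bij: "bij_betw \<sigma> {..<n*m} {..<n*m}"
    unfolding bij_betw_def using inj endo_inj_surj[OF _ img inj] by simp
  have key: "(\<sigma> p) div n = p mod m \<and> (\<sigma> p) mod n = p div m" if "p < n*m" for p
  proof -
    have "p div m < n" using that by (simp add: div_less_of_less_mult)
    then show ?thesis unfolding \<sigma>_def by simp
  qed
  have bij': "bij_betw \<sigma> {..<m*n} {..<m*n}" using bij by (simp add: mult.commute)
  have "cmat_norm (m*n) (m*n) (\<lambda>p q. G (p mod n) (q mod n) (p div n) (q div n))
      = cmat_norm (m*n) (m*n) (\<lambda>p q. (\<lambda>p q. G (p mod n) (q mod n) (p div n) (q div n)) (\<sigma> p) (\<sigma> q))"
    by (rule cmat_norm_permute[OF bij', symmetric])
  also have "\<dots> = cmat_norm (n*m) (n*m) (\<lambda>p q. G (p div m) (q div m) (p mod m) (q mod m))"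
    by (simp only: mult.commute[of m n], rule cmat_norm_cong) (simp add: key)
  finally show ?thesis by simp
qed

lemma cmat_norm_row_le: "cmat_norm 1 m (\<lambda>_ k. cnj (u k)) \<le> vec_norm u m"
proof (rule cmat_norm_le_form[OF vec_norm_nonneg])
  fix a v
  have e: "mat_form 1 m (\<lambda>_ k. cnj (u k)) a v = cnj (a 0) * (\<Sum>k<m. cnj (u k) * v k)"
    by (simp add: mat_form_def mat_vec_def)
  have n: "vec_norm a 1 = cmod (a 0)" by (simp add: vec_norm_def L2_set_def lessThan_Suc)
  have "cmod (a 0) * cmod (\<Sum>k<m. cnj (u k) * v k) \<le> cmod (a 0) * (vec_norm u m * vec_norm v m)"
    by (rule mult_left_mono[OF norm_inner_le_vec_norm]) simp
  then show "cmod (mat_form 1 m (\<lambda>_ k. cnj (u k)) a v) \<le> vec_norm u m * vec_norm a 1 * vec_norm v m"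
    by (simp only: e n norm_mult) (simp add: algebra_simps)
qed

lemma cmat_norm_col_le: "cmat_norm m 1 (\<lambda>k _. v k) \<le> vec_norm v m"
proof (rule cmat_norm_le_form[OF vec_norm_nonneg])
  fix a b
  have e: "mat_form m 1 (\<lambda>k _. v k) a b = (\<Sum>k<m. cnj (a k) * v k) * b 0"
    by (simp add: mat_form_def mat_vec_def sum_distrib_right mult.assoc)
  have n: "vec_norm b 1 = cmod (b 0)" by (simp add: vec_norm_def L2_set_def lessThan_Suc)
  have "cmod (\<Sum>k<m. cnj (a k) * v k) * cmod (b 0) \<le> (vec_norm a m * vec_norm v m) * cmod (b 0)"
    by (rule mult_right_mono[OF norm_inner_le_vec_norm]) simp
  then show "cmod (mat_form m 1 (\<lambda>k _. v k) a b) \<le> vec_norm v m * vec_norm a m * vec_norm b 1"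
    by (simp only: e n norm_mult) (simp add: algebra_simps)
qed

lemma vec_norm_block_le:
  fixes n m :: nat
  assumes "i < n"
  shows "vec_norm (\<lambda>k. u (i*m+k)) m \<le> vec_norm u (n*m)"
proof -
  have "(\<Sum>k<m. (cmod (u (i*m+k)))\<^sup>2) \<le> (\<Sum>i'<n. \<Sum>k<m. (cmod (u (i'*m+k)))\<^sup>2)"
    by (rule member_le_sum[where f="\<lambda>i'. \<Sum>k<m. (cmod (u (i'*m+k)))\<^sup>2"])
      (use assms in \<open>auto intro: sum_nonneg\<close>)
  also have "\<dots> = (\<Sum>p<n*m. (cmod (u p))\<^sup>2)" by (rule sum_lessThan_mult[symmetric])
  finally show ?thesis unfolding vec_norm_def L2_set_def by simp
qed

lemma cmat_norm_adjoint_le: "cmat_norm c r (\<lambda>i j. cnj (A j i)) \<le> cmat_norm r c A"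
proof (rule cmat_norm_le_form[OF cmat_norm_nonneg])
  fix u v
  have "mat_form c r (\<lambda>i j. cnj (A j i)) u v = cnj (mat_form r c A v u)"
    by (simp add: mat_form_def mat_vec_def cnj_sum
        sum_distrib_left sum_distrib_right mult_ac sum.swap[of _ "{..<c}" "{..<r}"])
  then show "cmod (mat_form c r (\<lambda>i j. cnj (A j i)) u v)
      \<le> cmat_norm r c A * vec_norm u c * vec_norm v r"
    using norm_mat_form_le[of r c A v u] by (simp add: mult_ac)
qed

lemma vec_norm_block_mat_vec_le:
  fixes r c q :: nat
  shows "vec_norm (\<lambda>p. \<Sum>j<c. B (p div q) j * v (j*q + p mod q)) (r*q)
      \<le> cmat_norm r c B * vec_norm v (c*q)"
proof -
  let ?w = "\<lambda>l j. v (j*q+l)"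
  have "(vec_norm (\<lambda>p. \<Sum>j<c. B (p div q) j * v (j*q + p mod q)) (r*q))\<^sup>2
      = (\<Sum>p<r*q. (cmod (\<Sum>j<c. B (p div q) j * v (j*q + p mod q)))\<^sup>2)"
    by (simp add: vec_norm_def L2_set_def sum_nonneg)
  also have "\<dots> = (\<Sum>b<r. \<Sum>l<q. (cmod (mat_vec B c (?w l) b))\<^sup>2)"
    unfolding sum_lessThan_mult by (intro sum.cong refl) (simp add: mat_vec_def)
  also have "\<dots> = (\<Sum>l<q. (vec_norm (mat_vec B c (?w l)) r)\<^sup>2)"
    by (subst sum.swap) (simp add: vec_norm_def L2_set_def sum_nonneg)
  also have "\<dots> \<le> (\<Sum>l<q. (cmat_norm r c B * vec_norm (?w l) c)\<^sup>2)"
    by (intro sum_mono power_mono vec_norm_mat_vec_le) simp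
  also have "\<dots> = (cmat_norm r c B)\<^sup>2 * (\<Sum>l<q. (vec_norm (?w l) c)\<^sup>2)"
    by (simp add: power_mult_distrib sum_distrib_left)
  also have "(\<Sum>l<q. (vec_norm (?w l) c)\<^sup>2) = (vec_norm v (c*q))\<^sup>2"
  proof -
    have "(\<Sum>l<q. (vec_norm (?w l) c)\<^sup>2) = (\<Sum>l<q. \<Sum>j<c. (cmod (v (j*q+l)))\<^sup>2)"
      by (simp add: vec_norm_def L2_set_def sum_nonneg)
    also have "\<dots> = (\<Sum>j<c. \<Sum>l<q. (cmod (v (j*q+l)))\<^sup>2)" by (rule sum.swap)
    also have "\<dots> = (\<Sum>p<c*q. (cmod (v p))\<^sup>2)" by (rule sum_lessThan_mult[symmetric])
    finally show ?thesis by (simp add: vec_norm_def L2_set_def sum_nonneg)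
  qed
  finally have "(vec_norm (\<lambda>p. \<Sum>j<c. B (p div q) j * v (j*q + p mod q)) (r*q))\<^sup>2
      \<le> (cmat_norm r c B * vec_norm v (c*q))\<^sup>2"
    by (simp add: power_mult_distrib)
  then show ?thesis by (rule power2_le_imp_le) simp
qed

lemma vec_norm_block_adjoint_le:
  fixes n m q :: nat
  shows "vec_norm (\<lambda>p. \<Sum>i<n. cnj (\<alpha> i (p div q)) * u (i*q + p mod q)) (m*q)
      \<le> cmat_norm n m \<alpha> * vec_norm u (n*q)"
proof -
  have "vec_norm (\<lambda>p. \<Sum>i<n. cnj (\<alpha> i (p div q)) * u (i*q + p mod q)) (m*q)
      \<le> cmat_norm m n (\<lambda>a i. cnj (\<alpha> i a)) * vec_norm u (n*q)"
    by (rule vec_norm_block_mat_vec_le[where B="\<lambda>a i. cnj (\<alpha> i a)" and c=n and v=u and r=m and q=q])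
  also have "\<dots> \<le> cmat_norm n m \<alpha> * vec_norm u (n*q)"
    by (rule mult_right_mono[OF cmat_norm_adjoint_le vec_norm_nonneg])
  finally show ?thesis .
qed

lemma cmat_norm_1x1: "cmat_norm 1 1 (\<lambda>_ _. c) = cmod c"
proof (rule antisym)
  show "cmat_norm 1 1 (\<lambda>_ _. c) \<le> cmod c"
  proof (rule cmat_norm_le_form)
    fix u v
    show "cmod (mat_form 1 1 (\<lambda>_ _. c) u v) \<le> cmod c * vec_norm u 1 * vec_norm v 1"
      by (simp add: mat_form_def mat_vec_def vec_norm_def L2_set_def lessThan_Suc norm_mult)
  qed simp
  have "vec_norm (mat_vec (\<lambda>_ _. c) 1 (\<lambda>_. 1)) 1 \<le> cmat_norm 1 1 (\<lambda>_ _. c)"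
    by (rule cmat_norm_ge_unit) (simp add: vec_norm_def L2_set_def lessThan_Suc)
  then show "cmod c \<le> cmat_norm 1 1 (\<lambda>_ _. c)"
    by (simp add: mat_vec_def vec_norm_def L2_set_def lessThan_Suc)
qed

lemma cmat_norm_no_rows: "cmat_norm 0 c A = 0"
  using cmat_norm_le_form[of 0 0 c A] cmat_norm_nonneg[of 0 c A] by (simp add: mat_form_def)

section \<open>Duals of matrix normed spaces\<close>

text \<open>Just the operator space axioms needed for the estimates below. Unlike definiteness, which
  needs Hahn-Banach, they pass from a space to its dual.\<close>

definition pre_operator_space :: "'a opsp \<Rightarrow> bool" where
  "pre_operator_space V \<longleftrightarrow> os_zero V \<in> os_carrier V \<and>
     (\<forall>x\<in>os_carrier V. \<forall>y\<in>os_carrier V. os_add V x y \<in> os_carrier V) \<and>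
     (\<forall>c. \<forall>x\<in>os_carrier V. os_smul V c x \<in> os_carrier V) \<and>
     (\<forall>x\<in>os_carrier V. os_add V (os_zero V) x = x) \<and>
     (\<forall>n X Y. (\<forall>i<n. \<forall>j<n. X i j = Y i j) \<longrightarrow> os_mnorm V n X = os_mnorm V n Y) \<and>
     (\<forall>n X. mat_in V n X \<longrightarrow> 0 \<le> os_mnorm V n X) \<and>
     (\<forall>n c X. mat_in V n X \<longrightarrow> os_mnorm V n (\<lambda>i j. os_smul V c (X i j)) \<le> cmod c * os_mnorm V n X) \<and>
     (\<forall>n m \<alpha> X \<beta>. mat_in V m X \<longrightarrow>
        os_mnorm V n (mtriple V m \<alpha> X \<beta>) \<le> cmat_norm n m \<alpha> * os_mnorm V m X * cmat_norm m n \<beta>)"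

lemma operator_space_imp_pre_operator_space:
  "operator_space V \<Longrightarrow> pre_operator_space V"
  unfolding operator_space_def vector_space_on_def pre_operator_space_def Let_def
  by (elim conjE) (intro conjI; assumption | simp)

lemma
  assumes "pre_operator_space V"
  shows pre_os_zero_closed: "os_zero V \<in> os_carrier V"
    and pre_os_add_closed: "x \<in> os_carrier V \<Longrightarrow> y \<in> os_carrier V \<Longrightarrow> os_add V x y \<in> os_carrier V"
    and pre_os_smul_closed: "x \<in> os_carrier V \<Longrightarrow> os_smul V c x \<in> os_carrier V"
    and pre_os_mnorm_nonneg: "mat_in V n X \<Longrightarrow> 0 \<le> os_mnorm V n X"
    and pre_os_mnorm_smul_le:
      "mat_in V n X \<Longrightarrow> os_mnorm V n (\<lambda>i j. os_smul V c (X i j)) \<le> cmod c * os_mnorm V n X"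
    and pre_os_mnorm_mtriple_le: "mat_in V m X \<Longrightarrow>
      os_mnorm V n (mtriple V m \<alpha> X \<beta>) \<le> cmat_norm n m \<alpha> * os_mnorm V m X * cmat_norm m n \<beta>"
  using assms unfolding pre_operator_space_def by blast+

lemma pre_os_add_zero_left:
  "pre_operator_space V \<Longrightarrow> x \<in> os_carrier V \<Longrightarrow> os_add V (os_zero V) x = x"
  unfolding pre_operator_space_def by (elim conjE) metis

lemma pre_os_mnorm_cong:
  "pre_operator_space V \<Longrightarrow> (\<And>i j. i < n \<Longrightarrow> j < n \<Longrightarrow> X i j = Y i j) \<Longrightarrow> os_mnorm V n X = os_mnorm V n Y"
  unfolding pre_operator_space_def by (elim conjE) metis

lemma vsumN_closed:
  "pre_operator_space V \<Longrightarrow> (\<And>k. k<n \<Longrightarrow> g k \<in> os_carrier V) \<Longrightarrow> vsumN V g n \<in> os_carrier V"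
  by (induction n) (auto intro: pre_os_zero_closed pre_os_add_closed)

lemma lin_fun_zero: assumes "pre_operator_space V" "lin_fun V f" shows "f (os_zero V) = 0"
proof -
  have z: "os_zero V \<in> os_carrier V" using assms pre_os_zero_closed by blast
  have "f (os_zero V) = f (os_add V (os_zero V) (os_zero V))"
    using pre_os_add_zero_left[OF assms(1) z] by simp
  also have "\<dots> = f (os_zero V) + f (os_zero V)" using assms(2) z unfolding lin_fun_def
    by blast
  finally show ?thesis by simp
qed

lemma lin_fun_vsumN:
  assumes "pre_operator_space V" "lin_fun V f"
  shows "(\<And>k. k<n \<Longrightarrow> g k \<in> os_carrier V) \<Longrightarrow> f (vsumN V g n) = (\<Sum>k<n. f (g k))"
proof (induction n)
  case 0 then show ?case using lin_fun_zero[OF assms] by simp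
next
  case (Suc n)
  have "vsumN V g n \<in> os_carrier V" using Suc.prems by (intro vsumN_closed[OF assms(1)]) auto
  moreover have "g n \<in> os_carrier V" using Suc.prems by auto
  ultimately have "f (vsumN V g (Suc n)) = f (vsumN V g n) + f (g n)"
    using assms(2) unfolding lin_fun_def by simp
  then show ?case using Suc by simp
qed

lemma lin_fun_smul:
  "lin_fun V f \<Longrightarrow> x \<in> os_carrier V \<Longrightarrow> f (os_smul V c x) = c * f x"
  unfolding lin_fun_def by blast

lemma mtriple_closed:
  "pre_operator_space V \<Longrightarrow> mat_in V m X \<Longrightarrow> mtriple V m \<alpha> X \<beta> i j \<in> os_carrier V"
  unfolding mtriple_def mat_in_def by (auto intro!: vsumN_closed pre_os_smul_closed)

lemma lin_fun_mtriple: assumes "pre_operator_space V" "lin_fun V f" "mat_in V m X"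
  shows "f (mtriple V m \<alpha> X \<beta> i j) = (\<Sum>k<m. \<Sum>l<m. \<alpha> i k * \<beta> l j * f (X k l))"
proof -
  have X: "X k l \<in> os_carrier V" if "k<m" "l<m" for k l using assms(3) that unfolding mat_in_def
    by blast
  have inner: "f (vsumN V (\<lambda>l. os_smul V (\<alpha> i k * \<beta> l j) (X k l)) m)
      = (\<Sum>l<m. \<alpha> i k * \<beta> l j * f (X k l))"
    if k: "k < m" for k
    by (subst lin_fun_vsumN[OF assms(1,2)])
      (auto intro!: pre_os_smul_closed[OF assms(1)] X k simp: lin_fun_smul[OF assms(2)] X k)
  show ?thesis unfolding mtriple_def
    by (subst lin_fun_vsumN[OF assms(1,2)])
      (auto intro!: vsumN_closed[OF assms(1)] pre_os_smul_closed[OF assms(1)] X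
        sum.cong simp: inner)
qed

lemma vsumN_dual: "vsumN (dual V) g n = (\<lambda>x. \<Sum>k<n. g k x)"
  by (induction n) (auto simp: dual_def)

lemma mtriple_dual:
  "mtriple (dual V) m \<alpha> F \<beta> i j = (\<lambda>x. \<Sum>k<m. \<Sum>l<m. \<alpha> i k * \<beta> l j * F k l x)"
  by (simp add: mtriple_def vsumN_dual) (simp add: dual_def)

lemma dual_carrier_bound: assumes "pre_operator_space V" "f \<in> dual_carrier V"
  shows "\<exists>K\<ge>0. \<forall>x\<in>os_carrier V. cmod (f x) \<le> K * os_mnorm V 1 (\<lambda>_ _. x)"
proof -
  obtain K where K: "\<forall>x\<in>os_carrier V. cmod (f x) \<le> K * os_mnorm V 1 (\<lambda>_ _. x)"
    using assms(2) unfolding dual_carrier_def by blast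
  have "cmod (f x) \<le> max K 0 * os_mnorm V 1 (\<lambda>_ _. x)" if x: "x \<in> os_carrier V" for x
  proof -
    have "0 \<le> os_mnorm V 1 (\<lambda>_ _. x)" using pre_os_mnorm_nonneg[OF assms(1)] x
      by (simp add: mat_in_def)
    then have "K * os_mnorm V 1 (\<lambda>_ _. x) \<le> max K 0 * os_mnorm V 1 (\<lambda>_ _. x)"
      by (intro mult_right_mono) auto
    then show ?thesis using K x by force
  qed
  then show ?thesis by (intro exI[of _ "max K 0"]) auto
qed

lemma dual_carrier_lin_fun:
  "f \<in> dual_carrier V \<Longrightarrow> lin_fun V f" unfolding dual_carrier_def by blast

text \<open>\<open>pair_mat m F X\<close> is the matrix \<open>[F\<^sub>i\<^sub>j (X\<^sub>k\<^sub>l)]\<close> with row \<open>(i, k)\<close> stored at index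
  \<open>i * m + k\<close>, as in \<^const>\<open>dual_mnorm\<close>.\<close>

abbreviation pair_mat :: "nat \<Rightarrow> (nat \<Rightarrow> nat \<Rightarrow> 'a \<Rightarrow> complex) \<Rightarrow>
    (nat \<Rightarrow> nat \<Rightarrow> 'a) \<Rightarrow> nat \<Rightarrow> nat \<Rightarrow> complex" where
  "pair_mat m F X \<equiv> (\<lambda>p q. F (p div m) (q div m) (X (p mod m) (q mod m)))"

lemma mat_in_dual:
  "mat_in (dual V) n F \<Longrightarrow> i < n \<Longrightarrow> j < n \<Longrightarrow> F i j \<in> dual_carrier V"
  by (simp add: mat_in_def dual_def)

lemma mat_form_pair_mat:
  fixes n m :: nat
  assumes V: "pre_operator_space V" and F: "mat_in (dual V) n F" and X: "mat_in V m X"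
  shows "mat_form (n*m) (n*m) (pair_mat m F X) u v =
     (\<Sum>i<n. \<Sum>j<n. F i j (mtriple V m (\<lambda>_ k. cnj (u (i*m+k))) X (\<lambda>l _. v (j*m+l)) 0 0))"
proof -
  have inner: "(\<Sum>q<n*m. pair_mat m F X p q * v q)
      = (\<Sum>j<n. \<Sum>l<m. F (p div m) j (X (p mod m) l) * v (j*m+l))"
      for p
    unfolding sum_lessThan_mult by (intro sum.cong refl) simp
  have "mat_form (n*m) (n*m) (pair_mat m F X) u v
      = (\<Sum>p<n*m. cnj (u p) * (\<Sum>j<n. \<Sum>l<m. F (p div m) j (X (p mod m) l) * v (j*m+l)))"
    unfolding mat_form_def mat_vec_def inner ..
  also have "\<dots> = (\<Sum>i<n. \<Sum>k<m. cnj (u (i*m+k)) * (\<Sum>j<n. \<Sum>l<m. F i j (X k l) * v (j*m+l)))"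
    unfolding sum_lessThan_mult by (intro sum.cong refl) simp
  also have "\<dots> = (\<Sum>i<n. \<Sum>k<m. \<Sum>j<n. \<Sum>l<m. cnj (u (i*m+k)) * v (j*m+l) * F i j (X k l))"
    by (simp add: sum_distrib_left algebra_simps)
  also have "\<dots> = (\<Sum>i<n. \<Sum>j<n. \<Sum>k<m. \<Sum>l<m. cnj (u (i*m+k)) * v (j*m+l) * F i j (X k l))"
    by (rule sum.cong[OF refl], rule sum.swap)
  also have "\<dots> = (\<Sum>i<n. \<Sum>j<n. F i j (mtriple V m (\<lambda>_ k. cnj (u (i*m+k))) X (\<lambda>l _. v (j*m+l)) 0 0))"
    by (intro sum.cong refl,
        subst lin_fun_mtriple[OF V dual_carrier_lin_fun[OF mat_in_dual[OF F]] X]) auto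
  finally show ?thesis .
qed

lemma norm_dual_mtriple_le:
  fixes m :: nat
  assumes V: "pre_operator_space V" and f: "f \<in> dual_carrier V" and X: "mat_in V m X"
    and K: "\<forall>x\<in>os_carrier V. cmod (f x) \<le> K * os_mnorm V 1 (\<lambda>_ _. x)" and K0: "0 \<le> K"
  shows "cmod (f (mtriple V m (\<lambda>_ k. cnj (a k)) X (\<lambda>l _. b l) 0 0))
      \<le> K * (vec_norm a m * os_mnorm V m X * vec_norm b m)"
proof -
  let ?y = "mtriple V m (\<lambda>_ k. cnj (a k)) X (\<lambda>l _. b l) 0 0"
  have y: "?y \<in> os_carrier V" by (rule mtriple_closed[OF V X])
  have "os_mnorm V 1 (\<lambda>_ _. ?y) = os_mnorm V 1 (mtriple V m (\<lambda>_ k. cnj (a k)) X (\<lambda>l _. b l))"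
    by (rule pre_os_mnorm_cong[OF V]) simp
  also have "\<dots> \<le> cmat_norm 1 m (\<lambda>_ k. cnj (a k)) * os_mnorm V m X * cmat_norm m 1 (\<lambda>l _. b l)"
    by (rule pre_os_mnorm_mtriple_le[OF V X])
  also have "\<dots> \<le> vec_norm a m * os_mnorm V m X * vec_norm b m"
    using pre_os_mnorm_nonneg[OF V X] cmat_norm_row_le[of m a] cmat_norm_col_le[of m b]
    by (intro mult_mono) (auto intro: mult_nonneg_nonneg)
  finally have "os_mnorm V 1 (\<lambda>_ _. ?y) \<le> vec_norm a m * os_mnorm V m X * vec_norm b m" .
  then have "K * os_mnorm V 1 (\<lambda>_ _. ?y) \<le> K * (vec_norm a m * os_mnorm V m X * vec_norm b m)"
    using K0 by (rule mult_left_mono)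
  then show ?thesis using K y by force
qed

text \<open>Without an upper bound the supremum defining \<^const>\<open>dual_mnorm\<close> would be junk; this is
  where the estimate for \<^const>\<open>mtriple\<close> in \<open>V\<close> is needed.\<close>

lemma pair_mat_bound:
  fixes n :: nat
  assumes V: "pre_operator_space V" and F: "mat_in (dual V) n F"
  shows "\<exists>K\<ge>0. \<forall>m X. mat_in V m X \<longrightarrow> cmat_norm (n*m) (n*m) (pair_mat m F X) \<le> K * os_mnorm V m X"
proof -
  have "\<forall>ij\<in>{..<n}\<times>{..<n}.
      \<exists>K\<ge>0. \<forall>x\<in>os_carrier V. cmod (F (fst ij) (snd ij) x)
      \<le> K * os_mnorm V 1 (\<lambda>_ _. x)"
    using dual_carrier_bound[OF V mat_in_dual[OF F]] by auto
  then obtain Kf where Kf: "\<And>ij. ij \<in> {..<n}\<times>{..<n} \<Longrightarrow>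
      0 \<le> Kf ij \<and> (\<forall>x\<in>os_carrier V. cmod (F (fst ij) (snd ij) x)
      \<le> Kf ij * os_mnorm V 1 (\<lambda>_ _. x))"
    by metis
  define Kt where "Kt = (\<Sum>i<n. \<Sum>j<n. Kf (i,j))"
  have Kt0: "0 \<le> Kt" unfolding Kt_def using Kf by (auto intro!: sum_nonneg)
  show ?thesis
  proof (intro exI[of _ Kt] conjI allI impI Kt0)
    fix m X assume X: "mat_in V m X"
    have X0: "0 \<le> os_mnorm V m X" by (rule pre_os_mnorm_nonneg[OF V X])
    show "cmat_norm (n*m) (n*m) (pair_mat m F X) \<le> Kt * os_mnorm V m X"
    proof (rule cmat_norm_le_form)
      show "0 \<le> Kt * os_mnorm V m X" using Kt0 X0 by simp
      fix u v
      have "cmod (mat_form (n*m) (n*m) (pair_mat m F X) u v)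
          \<le> (\<Sum>i<n. \<Sum>j<n. cmod (F i j (mtriple V m (\<lambda>_ k. cnj (u (i*m+k)))
              X (\<lambda>l _. v (j*m+l)) 0 0)))"
        unfolding mat_form_pair_mat[OF V F X]
        by (rule order.trans[OF norm_sum sum_mono[OF norm_sum]])
      also have "\<dots> \<le> (\<Sum>i<n. \<Sum>j<n. Kf (i,j) *
            (vec_norm (\<lambda>k. u (i*m+k)) m * os_mnorm V m X * vec_norm (\<lambda>l. v (j*m+l)) m))"
        using Kf by (intro sum_mono norm_dual_mtriple_le[OF V mat_in_dual[OF F] X]) auto
      also have "\<dots> \<le> (\<Sum>i<n. \<Sum>j<n. Kf (i,j) *
            (vec_norm u (n*m) * os_mnorm V m X * vec_norm v (n*m)))"
        using Kf X0 vec_norm_block_le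
        by (intro sum_mono mult_left_mono mult_mono) (auto intro: mult_nonneg_nonneg)
      also have "\<dots> = (\<Sum>i<n. \<Sum>j<n. Kf (i,j)) *
            (vec_norm u (n*m) * os_mnorm V m X * vec_norm v (n*m))"
        by (simp only: sum_distrib_right)
      also have "\<dots> = Kt * os_mnorm V m X * vec_norm u (n*m) * vec_norm v (n*m)"
        unfolding Kt_def by (simp only: mult.commute mult.left_commute mult.assoc)
      finally show "cmod (mat_form (n*m) (n*m) (pair_mat m F X) u v)
          \<le> Kt * os_mnorm V m X * vec_norm u (n*m) * vec_norm v (n*m)" .
    qed
  qed
qed

definition dual_mnorm_set :: "'a opsp \<Rightarrow> nat \<Rightarrow> (nat \<Rightarrow> nat \<Rightarrow> 'a \<Rightarrow> complex) \<Rightarrow> real set" where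
  "dual_mnorm_set V n F = {cmat_norm (n * m) (n * m) (pair_mat m F X)
      | m X. 0 < m \<and> mat_in V m X \<and> os_mnorm V m X \<le> 1}"

lemma dual_mnorm_eq_Sup: "dual_mnorm V n F = Sup (insert 0 (dual_mnorm_set V n F))"
  unfolding dual_mnorm_def dual_mnorm_set_def ..

lemma dual_mnorm_set_bdd:
  assumes V: "pre_operator_space V" and F: "mat_in (dual V) n F"
  shows "bdd_above (insert 0 (dual_mnorm_set V n F))"
proof -
  obtain K where K0: "0 \<le> K"
      and K: "\<And>m X. mat_in V m X \<Longrightarrow> cmat_norm (n*m) (n*m) (pair_mat m F X)
      \<le> K * os_mnorm V m X"
    using pair_mat_bound[OF V F] by blast
  have "x \<le> K" if "x \<in> insert 0 (dual_mnorm_set V n F)" for x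
  proof -
    { fix m X assume "mat_in V m X" "os_mnorm V m X \<le> 1"
      then have "cmat_norm (n*m) (n*m) (pair_mat m F X) \<le> K"
        using K[of m X] K0 mult_left_le[of "os_mnorm V m X" K] by linarith }
    then show ?thesis using that K0 unfolding dual_mnorm_set_def by auto
  qed
  then show ?thesis unfolding bdd_above_def by blast
qed

lemma dual_mnorm_ge: assumes V: "pre_operator_space V" and F: "mat_in (dual V) n F"
  and "0 < m" "mat_in V m X" "os_mnorm V m X \<le> 1"
  shows "cmat_norm (n * m) (n * m) (pair_mat m F X) \<le> dual_mnorm V n F"
  unfolding dual_mnorm_eq_Sup
  by (rule cSup_upper[OF _ dual_mnorm_set_bdd[OF V F]])
      (use assms in \<open>auto simp: dual_mnorm_set_def\<close>)

lemma dual_mnorm_nonneg: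
  assumes V: "pre_operator_space V" and F: "mat_in (dual V) n F"
  shows "0 \<le> dual_mnorm V n F"
  unfolding dual_mnorm_eq_Sup by (rule cSup_upper[OF _ dual_mnorm_set_bdd[OF V F]]) auto

lemma dual_mnorm_le: assumes "0 \<le> M"
  and "\<And>m X. 0 < m \<Longrightarrow> mat_in V m X \<Longrightarrow> os_mnorm V m X \<le> 1 \<Longrightarrow>
      cmat_norm (n * m) (n * m) (pair_mat m F X) \<le> M"
  shows "dual_mnorm V n F \<le> M"
  unfolding dual_mnorm_eq_Sup
  by (rule cSup_least) (use assms in \<open>auto simp: dual_mnorm_set_def\<close>)

lemma dual_carrier_zero: "(\<lambda>_. 0) \<in> dual_carrier V"
  unfolding dual_carrier_def lin_fun_def by (auto intro!: exI[of _ 0])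

lemma dual_carrier_add: assumes "f \<in> dual_carrier V" "g \<in> dual_carrier V"
  shows "(\<lambda>x. f x + g x) \<in> dual_carrier V"
proof -
  obtain K1 where K1: "\<forall>x\<in>os_carrier V. cmod (f x) \<le> K1 * os_mnorm V 1 (\<lambda>_ _. x)"
    using assms(1) unfolding dual_carrier_def by blast
  obtain K2 where K2: "\<forall>x\<in>os_carrier V. cmod (g x) \<le> K2 * os_mnorm V 1 (\<lambda>_ _. x)"
    using assms(2) unfolding dual_carrier_def by blast
  have "\<forall>x\<in>os_carrier V. cmod (f x + g x) \<le> (K1 + K2) * os_mnorm V 1 (\<lambda>_ _. x)"
  proof
    fix x assume x: "x \<in> os_carrier V"
    have "cmod (f x + g x) \<le> cmod (f x) + cmod (g x)" by (rule norm_triangle_ineq)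
    also have "\<dots> \<le> (K1 + K2) * os_mnorm V 1 (\<lambda>_ _. x)" using K1 K2 x
      by (simp add: distrib_right add_mono)
    finally show "cmod (f x + g x) \<le> (K1 + K2) * os_mnorm V 1 (\<lambda>_ _. x)" .
  qed
  moreover have "lin_fun V (\<lambda>x. f x + g x)"
    using dual_carrier_lin_fun[OF assms(1)] dual_carrier_lin_fun[OF assms(2)]
    unfolding lin_fun_def by (simp add: algebra_simps)
  ultimately show ?thesis using assms unfolding dual_carrier_def by auto
qed

lemma dual_carrier_smul: assumes "f \<in> dual_carrier V"
  shows "(\<lambda>x. c * f x) \<in> dual_carrier V"
proof -
  obtain K1 where K1: "\<forall>x\<in>os_carrier V. cmod (f x) \<le> K1 * os_mnorm V 1 (\<lambda>_ _. x)"
    using assms(1) unfolding dual_carrier_def by blast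
  have "\<forall>x\<in>os_carrier V. cmod (c * f x) \<le> (cmod c * K1) * os_mnorm V 1 (\<lambda>_ _. x)"
    using K1 by (simp add: norm_mult mult.assoc mult_left_mono)
  moreover have "lin_fun V (\<lambda>x. c * f x)" using dual_carrier_lin_fun[OF assms(1)]
    unfolding lin_fun_def by (simp add: algebra_simps)
  ultimately show ?thesis using assms unfolding dual_carrier_def by auto
qed

lemma dual_mnorm_cong:
  assumes "\<And>i j. i < n \<Longrightarrow> j < n \<Longrightarrow> F i j = G i j"
  shows "dual_mnorm V n F = dual_mnorm V n G"
proof -
  have "cmat_norm (n*m) (n*m) (pair_mat m F X) = cmat_norm (n*m) (n*m) (pair_mat m G X)" for m X
    by (rule cmat_norm_cong) (simp add: assms div_less_of_less_mult)
  then show ?thesis unfolding dual_mnorm_eq_Sup dual_mnorm_set_def by simp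
qed

lemma mat_form_pair_mat_mtriple:
  fixes n m q :: nat
  assumes F: "mat_in (dual V) m F"
  shows "mat_form (n*q) (n*q) (pair_mat q (mtriple (dual V) m \<alpha> F \<beta>) X) u v
    = mat_form (m*q) (m*q) (pair_mat q F X) (\<lambda>p. \<Sum>i<n. cnj (\<alpha> i (p div q)) * u (i*q + p mod q))
                                   (\<lambda>p. \<Sum>j<n. \<beta> (p div q) j * v (j*q + p mod q))"
proof -
  have L: "mat_form (n*q) (n*q) (pair_mat q (mtriple (dual V) m \<alpha> F \<beta>) X) u v =
    (\<Sum>i<n. \<Sum>k<q. cnj (u (i*q+k)) *
        (\<Sum>j<n. \<Sum>l<q. (\<Sum>a<m. \<Sum>b<m. \<alpha> i a * \<beta> b j * F a b (X k l)) * v (j*q+l)))"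
    unfolding mat_form_def mat_vec_def sum_lessThan_mult mtriple_dual by (intro sum.cong refl) simp
  have R: "mat_form (m*q) (m*q) (pair_mat q F X) (\<lambda>p. \<Sum>i<n. cnj (\<alpha> i (p div q)) * u (i*q + p mod q))
                                   (\<lambda>p. \<Sum>j<n. \<beta> (p div q) j * v (j*q + p mod q)) =
    (\<Sum>a<m. \<Sum>k<q. cnj (\<Sum>i<n. cnj (\<alpha> i a) * u (i*q+k)) *
        (\<Sum>b<m. \<Sum>l<q. F a b (X k l) * (\<Sum>j<n. \<beta> b j * v (j*q+l))))"
    unfolding mat_form_def mat_vec_def sum_lessThan_mult by (intro sum.cong refl) simp
  show ?thesis unfolding L R
    apply (simp add: sum_distrib_left sum_distrib_right cnj_sum
        sum.swap[of _ "{..<n}" "{..<q}"] sum.swap[of _ "{..<m}" "{..<q}"]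
        sum.swap[of _ "{..<m}" "{..<n}"] mult_ac)
    apply (rule sum.cong[OF refl], rule sum.cong[OF refl], rule sum.swap)
    done
qed

lemma dual_mnorm_smul_le:
  assumes V: "pre_operator_space V" and F: "mat_in (dual V) n F"
  shows "dual_mnorm V n (\<lambda>i j x. c * F i j x) \<le> cmod c * dual_mnorm V n F"
proof (rule dual_mnorm_le)
  show "0 \<le> cmod c * dual_mnorm V n F" using dual_mnorm_nonneg[OF V F] by simp
  fix m X assume "0 < m" "mat_in V m X" "os_mnorm V m X \<le> 1"
  then have "cmat_norm (n * m) (n * m) (pair_mat m F X) \<le> dual_mnorm V n F"
    by (rule dual_mnorm_ge[OF V F])
  then show "cmat_norm (n * m) (n * m) (pair_mat m (\<lambda>i j x. c * F i j x) X)
      \<le> cmod c * dual_mnorm V n F"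
    by (simp add: cmat_norm_scale mult_left_mono)
qed

lemma dual_simps[simp]: "os_carrier (dual V) = dual_carrier V" "os_mnorm (dual V) = dual_mnorm V"
  "os_add (dual V) = (\<lambda>f g x. f x + g x)"
  "os_smul (dual V) = (\<lambda>c f x. c * f x)" "os_zero (dual V) = (\<lambda>_. 0)"
  by (simp_all add: dual_def)

lemma dual_mnorm_mtriple_le:
  assumes V: "pre_operator_space V" and F: "mat_in (dual V) m F"
  shows "dual_mnorm V n (mtriple (dual V) m \<alpha> F \<beta>)
      \<le> cmat_norm n m \<alpha> * dual_mnorm V m F * cmat_norm m n \<beta>"
proof (rule dual_mnorm_le)
  have F0: "0 \<le> dual_mnorm V m F" by (rule dual_mnorm_nonneg[OF V F])
  then show "0 \<le> cmat_norm n m \<alpha> * dual_mnorm V m F * cmat_norm m n \<beta>" by simp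
  fix q X assume q: "0 < q" and X: "mat_in V q X" and X1: "os_mnorm V q X \<le> 1"
  show "cmat_norm (n * q) (n * q) (pair_mat q (mtriple (dual V) m \<alpha> F \<beta>) X)
      \<le> cmat_norm n m \<alpha> * dual_mnorm V m F * cmat_norm m n \<beta>"
  proof (rule cmat_norm_le_form)
    show "0 \<le> cmat_norm n m \<alpha> * dual_mnorm V m F * cmat_norm m n \<beta>" using F0
      by simp
    fix u v
    let ?u = "\<lambda>p. \<Sum>i<n. cnj (\<alpha> i (p div q)) * u (i * q + p mod q)"
    let ?v = "\<lambda>p. \<Sum>j<n. \<beta> (p div q) j * v (j * q + p mod q)"
    have "cmod (mat_form (n * q) (n * q) (pair_mat q (mtriple (dual V) m \<alpha> F \<beta>) X) u v)
        = cmod (mat_form (m * q) (m * q) (pair_mat q F X) ?u ?v)"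
      by (simp only: mat_form_pair_mat_mtriple[OF F])
    also have "\<dots> \<le> cmat_norm (m * q) (m * q) (pair_mat q F X)
        * vec_norm ?u (m * q) * vec_norm ?v (m * q)"
      by (rule norm_mat_form_le)
    also have "\<dots> \<le> dual_mnorm V m F *
        (cmat_norm n m \<alpha> * vec_norm u (n * q))
        * (cmat_norm m n \<beta> * vec_norm v (n * q))"
      using dual_mnorm_ge[OF V F q X X1] vec_norm_block_adjoint_le[where \<alpha> = \<alpha> and u = u]
        vec_norm_block_mat_vec_le[where B = \<beta> and v = v] F0
      by (intro mult_mono) (auto intro: mult_nonneg_nonneg)
    finally show "cmod (mat_form (n * q) (n * q) (pair_mat q (mtriple (dual V) m \<alpha> F \<beta>) X) u v)
        \<le> cmat_norm n m \<alpha> * dual_mnorm V m F * cmat_norm m n \<beta>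
          * vec_norm u (n * q) * vec_norm v (n * q)"
      by (simp add: mult_ac)
  qed
qed

lemma pre_operator_space_dual:
  assumes V: "pre_operator_space V"
  shows "pre_operator_space (dual V)"
  unfolding pre_operator_space_def dual_simps
  using dual_carrier_zero dual_carrier_add dual_carrier_smul dual_mnorm_nonneg[OF V]
    dual_mnorm_smul_le[OF V] dual_mnorm_mtriple_le[OF V]
  by (auto intro: dual_mnorm_cong)

lemma lincomb_dual: "lincomb (dual V) cs bs = (\<lambda>x. \<Sum>k<length bs. cs!k * (bs!k) x)"
  unfolding lincomb_def vsumN_dual by simp

lemma le_mult_of_scaled_le:
  fixes P A N :: real
  assumes "0 \<le> N" "0 \<le> A" and scaled: "\<And>t. 0 < t \<Longrightarrow> t * N \<le> 1 \<Longrightarrow> t * P \<le> A"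
  shows "P \<le> A * N"
proof (cases "N = 0")
  case True
  show ?thesis
  proof (rule ccontr)
    assume "\<not> P \<le> A * N"
    then have "0 < P" using True by simp
    then have "(A + 1) / P * P \<le> A" using scaled[of "(A + 1) / P"] True assms(2) by simp
    then show False using \<open>0 < P\<close> by simp
  qed
next
  case False
  then have "0 < N" using assms(1) by simp
  then have "1 / N * P \<le> A" using scaled[of "1 / N"] by simp
  then show ?thesis using \<open>0 < N\<close> by (simp add: field_simps)
qed

text \<open>Scaling \<open>X\<close> down instead of normalising it avoids dividing by a norm that may vanish
  for \<open>X \<noteq> 0\<close>.\<close>

lemma cmat_norm_pair_mat_le:
  assumes V: "pre_operator_space V" and F: "mat_in (dual V) q F" and X: "mat_in V n X"
  shows "cmat_norm (q * n) (q * n) (pair_mat n F X) \<le> dual_mnorm V q F * os_mnorm V n X"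
proof (cases "n = 0")
  case True
  then show ?thesis
    using dual_mnorm_nonneg[OF V F] pre_os_mnorm_nonneg[OF V X] by (simp add: cmat_norm_no_rows)
next
  case False
  show ?thesis
  proof (rule le_mult_of_scaled_le[OF pre_os_mnorm_nonneg[OF V X] dual_mnorm_nonneg[OF V F]])
    fix t :: real assume t: "0 < t" "t * os_mnorm V n X \<le> 1"
    let ?Y = "\<lambda>i j. os_smul V (complex_of_real t) (X i j)"
    have Y: "mat_in V n ?Y" using X pre_os_smul_closed[OF V] by (simp add: mat_in_def)
    have "os_mnorm V n ?Y \<le> t * os_mnorm V n X"
      using pre_os_mnorm_smul_le[OF V X, of "complex_of_real t"] t(1) by simp
    then have Y1: "os_mnorm V n ?Y \<le> 1" using t(2) by linarith
    have "F i j (?Y k l) = t * F i j (X k l)" if "i < q" "j < q" "k < n" "l < n" for i j k l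
      using that F X by (simp add: mat_in_def lin_fun_smul[OF dual_carrier_lin_fun])
    then have "cmat_norm (q * n) (q * n) (pair_mat n F ?Y)
        = cmat_norm (q * n) (q * n) (\<lambda>p p'. t * pair_mat n F X p p')"
      using False by (intro cmat_norm_cong) (simp add: div_less_of_less_mult)
    also have "\<dots> = t * cmat_norm (q * n) (q * n) (pair_mat n F X)"
      using t(1) by (simp add: cmat_norm_scale)
    finally show "t * cmat_norm (q * n) (q * n) (pair_mat n F X) \<le> dual_mnorm V q F"
      using dual_mnorm_ge[OF V F _ Y Y1] False by simp
  qed
qed

lemma norm_dual_apply_le:
  assumes V: "pre_operator_space V" and f: "f \<in> dual_carrier V" and x: "x \<in> os_carrier V"
  shows "cmod (f x) \<le> dual_mnorm V 1 (\<lambda>_ _. f) * os_mnorm V 1 (\<lambda>_ _. x)"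
  using cmat_norm_pair_mat_le[OF V, of 1 "\<lambda>_ _. f" 1 "\<lambda>_ _. x"] cmat_norm_1x1[of "f x"] f x
  by (simp add: mat_in_def)

lemma kappa_apply: "f \<in> dual_carrier V \<Longrightarrow> kappa V x f = f x"
  by (simp add: kappa_def)

lemma kappa_in_dual_carrier:
  assumes V: "pre_operator_space V" and x: "x \<in> os_carrier V"
  shows "kappa V x \<in> dual_carrier (dual V)"
proof -
  have "lin_fun (dual V) (kappa V x)"
    unfolding lin_fun_def by (simp add: kappa_def dual_carrier_add dual_carrier_smul)
  moreover have "\<forall>f\<in>os_carrier (dual V). cmod (kappa V x f)
      \<le> os_mnorm V 1 (\<lambda>_ _. x) * os_mnorm (dual V) 1 (\<lambda>_ _. f)"
    using norm_dual_apply_le[OF V _ x] by (simp add: kappa_def mult.commute)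
  ultimately show ?thesis unfolding dual_carrier_def by (auto simp: kappa_def)
qed

lemma kappa_add:
  "x \<in> os_carrier V \<Longrightarrow> y \<in> os_carrier V \<Longrightarrow> kappa V (os_add V x y) = (\<lambda>f. kappa V x f + kappa V y f)"
  by (auto simp: kappa_def fun_eq_iff lin_fun_def dest!: dual_carrier_lin_fun)

lemma kappa_smul:
  "x \<in> os_carrier V \<Longrightarrow> kappa V (os_smul V c x) = (\<lambda>f. c * kappa V x f)"
  by (auto simp: kappa_def fun_eq_iff lin_fun_def dest!: dual_carrier_lin_fun)

lemma dual_mnorm_kappa_le:
  assumes V: "pre_operator_space V" and X: "mat_in V n X"
  shows "dual_mnorm (dual V) n (\<lambda>i j. kappa V (X i j)) \<le> os_mnorm V n X"
proof (rule dual_mnorm_le[OF pre_os_mnorm_nonneg[OF V X]])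
  fix q W assume q: "0 < q" and W: "mat_in (dual V) q W" and W1: "os_mnorm (dual V) q W \<le> 1"
  have "cmat_norm (n * q) (n * q) (pair_mat q (\<lambda>i j. kappa V (X i j)) W)
      = cmat_norm (n * q) (n * q) (\<lambda>p p'. (\<lambda>i j k l. W k l (X i j))
          (p div q) (p' div q) (p mod q) (p' mod q))"
    using W q by (intro cmat_norm_cong) (simp add: mat_in_def kappa_apply)
  also have "\<dots> = cmat_norm (q * n) (q * n) (pair_mat n W X)"
    by (rule cmat_norm_swap_blocks)
  also have "\<dots> \<le> dual_mnorm V q W * os_mnorm V n X"
    by (rule cmat_norm_pair_mat_le[OF V W X])
  also have "\<dots> \<le> os_mnorm V n X"
    using W1 dual_mnorm_nonneg[OF V W] pre_os_mnorm_nonneg[OF V X]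
    by (simp add: mult_left_le_one_le)
  finally show "cmat_norm (n * q) (n * q) (pair_mat q (\<lambda>i j. kappa V (X i j)) W) \<le> os_mnorm V n X" .
qed

section \<open>Hahn-Banach for the norm on \<open>1 \<times> 1\<close> matrices\<close>

lemma operator_space_mnorm_nonneg:
  "operator_space V \<Longrightarrow> mat_in V n X \<Longrightarrow> 0 \<le> os_mnorm V n X"
  unfolding operator_space_def by (elim conjE) metis

lemma operator_space_mnorm_eq_0_iff:
  "operator_space V \<Longrightarrow> mat_in V n X \<Longrightarrow> os_mnorm V n X = 0 \<longleftrightarrow> (\<forall>i<n. \<forall>j<n. X i j = os_zero V)"
  unfolding operator_space_def by (elim conjE) metis

lemma operator_space_mnorm_triangle:
  "operator_space V \<Longrightarrow> mat_in V n X \<Longrightarrow> mat_in V n Y \<Longrightarrow>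
   os_mnorm V n (\<lambda>i j. os_add V (X i j) (Y i j)) \<le> os_mnorm V n X + os_mnorm V n Y"
  unfolding operator_space_def by (elim conjE) metis

lemma operator_space_mnorm_smul:
  "operator_space V \<Longrightarrow> mat_in V n X \<Longrightarrow>
    os_mnorm V n (\<lambda>i j. os_smul V c (X i j)) = cmod c * os_mnorm V n X"
  unfolding operator_space_def by (elim conjE) metis

locale opspace =
  fixes V :: "'a opsp"
  assumes operator_space: "operator_space V"
begin

abbreviation "car \<equiv> os_carrier V"
abbreviation "vadd \<equiv> os_add V"
abbreviation "vsmul \<equiv> os_smul V"
abbreviation "vzero \<equiv> os_zero V"

definition norm1 :: "'a \<Rightarrow> real" where
  "norm1 x = os_mnorm V 1 (\<lambda>_ _. x)"

definition rsmul :: "real \<Rightarrow> 'a \<Rightarrow> 'a" where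
  "rsmul r x = vsmul (complex_of_real r) x"

lemma vector_space: "vector_space_on V"
  using operator_space unfolding operator_space_def by (elim conjE) metis

lemma zero_closed: "vzero \<in> car"
  using vector_space unfolding vector_space_on_def Let_def by (elim conjE) metis
lemma add_closed: "x \<in> car \<Longrightarrow> y \<in> car \<Longrightarrow> vadd x y \<in> car"
  using vector_space unfolding vector_space_on_def Let_def by (elim conjE) metis
lemma smul_closed: "x \<in> car \<Longrightarrow> vsmul c x \<in> car"
  using vector_space unfolding vector_space_on_def Let_def by (elim conjE) metis
lemma add_assoc:
  "x \<in> car \<Longrightarrow> y \<in> car \<Longrightarrow> z \<in> car \<Longrightarrow> vadd (vadd x y) z = vadd x (vadd y z)"
  using vector_space unfolding vector_space_on_def Let_def by (elim conjE) metis
lemma add_commute: "x \<in> car \<Longrightarrow> y \<in> car \<Longrightarrow> vadd x y = vadd y x"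
  using vector_space unfolding vector_space_on_def Let_def by (elim conjE) metis
lemma add_zero_left: "x \<in> car \<Longrightarrow> vadd vzero x = x"
  using vector_space unfolding vector_space_on_def Let_def by (elim conjE) metis
lemma smul_add_right:
  "x \<in> car \<Longrightarrow> y \<in> car \<Longrightarrow> vsmul c (vadd x y) = vadd (vsmul c x) (vsmul c y)"
  using vector_space unfolding vector_space_on_def Let_def by (elim conjE) metis
lemma smul_add_left: "x \<in> car \<Longrightarrow> vsmul (c + d) x = vadd (vsmul c x) (vsmul d x)"
  using vector_space unfolding vector_space_on_def Let_def by (elim conjE) metis
lemma smul_smul: "x \<in> car \<Longrightarrow> vsmul c (vsmul d x) = vsmul (c * d) x"
  using vector_space unfolding vector_space_on_def Let_def by (elim conjE) (simp add: mult.commute)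
lemma smul_one: "x \<in> car \<Longrightarrow> vsmul 1 x = x"
  using vector_space unfolding vector_space_on_def Let_def by (elim conjE) metis

lemma mat1_in: "x \<in> car \<Longrightarrow> mat_in V 1 (\<lambda>_ _. x)"
  by (simp add: mat_in_def)

lemma norm1_nonneg: "x \<in> car \<Longrightarrow> 0 \<le> norm1 x"
  unfolding norm1_def by (rule operator_space_mnorm_nonneg[OF operator_space mat1_in])
lemma norm1_eq_0_iff: "x \<in> car \<Longrightarrow> norm1 x = 0 \<longleftrightarrow> x = vzero"
  unfolding norm1_def by (subst operator_space_mnorm_eq_0_iff[OF operator_space mat1_in]) auto
lemma norm1_triangle:
  "x \<in> car \<Longrightarrow> y \<in> car \<Longrightarrow> norm1 (vadd x y) \<le> norm1 x + norm1 y"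
  unfolding norm1_def by (rule operator_space_mnorm_triangle[OF operator_space mat1_in mat1_in])
lemma norm1_smul: "x \<in> car \<Longrightarrow> norm1 (vsmul c x) = cmod c * norm1 x"
  unfolding norm1_def by (rule operator_space_mnorm_smul[OF operator_space mat1_in])

lemma add_zero_right: "x \<in> car \<Longrightarrow> vadd x vzero = x"
  using add_zero_left add_commute zero_closed by metis

lemma rsmul_closed: "x \<in> car \<Longrightarrow> rsmul r x \<in> car"
  unfolding rsmul_def by (rule smul_closed)

lemma norm1_rsmul: "x \<in> car \<Longrightarrow> norm1 (rsmul r x) = \<bar>r\<bar> * norm1 x"
  unfolding rsmul_def by (simp add: norm1_smul)

lemma rsmul_zero: "x \<in> car \<Longrightarrow> rsmul 0 x = vzero"
  using norm1_eq_0_iff[OF rsmul_closed, of x 0] norm1_rsmul[of x 0] by simp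

lemma rsmul_one: "x \<in> car \<Longrightarrow> rsmul 1 x = x"
  unfolding rsmul_def by (simp add: smul_one)

lemma rsmul_add_left: "x \<in> car \<Longrightarrow> vadd (rsmul r x) (rsmul s x) = rsmul (r + s) x"
  unfolding rsmul_def by (simp add: smul_add_left)

lemma rsmul_add_right:
  "x \<in> car \<Longrightarrow> y \<in> car \<Longrightarrow> rsmul r (vadd x y) = vadd (rsmul r x) (rsmul r y)"
  unfolding rsmul_def by (rule smul_add_right)

lemma rsmul_rsmul: "x \<in> car \<Longrightarrow> rsmul r (rsmul s x) = rsmul (r * s) x"
  unfolding rsmul_def by (simp add: smul_smul)

lemma add_rsmul_minus_one: "x \<in> car \<Longrightarrow> vadd x (rsmul (-1) x) = vzero"
  using rsmul_add_left[of x 1 "-1"] rsmul_one rsmul_zero by simp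

lemma add_left_cancel:
  assumes "x \<in> car" "y \<in> car" "z \<in> car" "vadd x y = vadd x z"
  shows "y = z"
proof -
  have "vadd (rsmul (-1) x) (vadd x w) = w" if "w \<in> car" for w
    using that assms(1) add_rsmul_minus_one[OF assms(1)]
    by (metis add_assoc add_commute add_zero_left rsmul_closed)
  then show ?thesis using assms by metis
qed

lemma add_add_swap:
  assumes "a \<in> car" "b \<in> car" "c \<in> car" "d \<in> car"
  shows "vadd (vadd a b) (vadd c d) = vadd (vadd a c) (vadd b d)"
  using assms by (metis add_assoc add_closed add_commute)

text \<open>Partial real-linear functionals dominated by \<^const>\<open>norm1\<close>, encoded by their graphs so
  that Zorn's lemma applies to the inclusion order.\<close>

definition hb_graph :: "'a \<Rightarrow> ('a \<times> real) set \<Rightarrow> bool" where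
  "hb_graph x0 G \<longleftrightarrow> fst ` G \<subseteq> car \<and> (\<forall>y a b. (y, a) \<in> G \<longrightarrow> (y, b) \<in> G \<longrightarrow> a = b) \<and>
     (\<forall>y a w b. (y, a) \<in> G \<longrightarrow> (w, b) \<in> G \<longrightarrow> (vadd y w, a + b) \<in> G) \<and>
     (\<forall>r y a. (y, a) \<in> G \<longrightarrow> (rsmul r y, r * a) \<in> G) \<and>
     (\<forall>y a. (y, a) \<in> G \<longrightarrow> a \<le> norm1 y) \<and> (x0, norm1 x0) \<in> G"

lemma
  assumes "hb_graph x0 G"
  shows hb_graph_carrier: "(y, a) \<in> G \<Longrightarrow> y \<in> car"
    and hb_graph_unique: "(y, a) \<in> G \<Longrightarrow> (y, b) \<in> G \<Longrightarrow> a = b"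
    and hb_graph_add: "(y, a) \<in> G \<Longrightarrow> (w, b) \<in> G \<Longrightarrow> (vadd y w, a + b) \<in> G"
    and hb_graph_rsmul: "(y, a) \<in> G \<Longrightarrow> (rsmul r y, r * a) \<in> G"
    and hb_graph_le_norm1: "(y, a) \<in> G \<Longrightarrow> a \<le> norm1 y"
    and hb_graph_base: "(x0, norm1 x0) \<in> G"
  using assms unfolding hb_graph_def by (force simp: image_subset_iff)+

lemma hb_graph_zero:
  "hb_graph x0 G \<Longrightarrow> x0 \<in> car \<Longrightarrow> (vzero, 0) \<in> G"
  using hb_graph_rsmul[OF _ hb_graph_base, where r=0] rsmul_zero by fastforce

lemma hb_graph_line:
  assumes x0: "x0 \<in> car" "x0 \<noteq> vzero"
  shows "hb_graph x0 {(rsmul r x0, r * norm1 x0) | r. True}"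
proof -
  have pos: "0 < norm1 x0" using norm1_eq_0_iff[OF x0(1)] norm1_nonneg[OF x0(1)] x0(2) by linarith
  have inj: "r = s" if "rsmul r x0 = rsmul s x0" for r s
  proof -
    have "rsmul (r - s) x0 = vadd (rsmul s x0) (rsmul (- s) x0)"
      using rsmul_add_left[OF x0(1), of r "-s"] that by simp
    also have "\<dots> = vzero" using rsmul_add_left[OF x0(1), of s "-s"] rsmul_zero[OF x0(1)]
      by simp
    finally have "\<bar>r - s\<bar> * norm1 x0 = 0"
      using norm1_rsmul[OF x0(1), of "r - s"] norm1_eq_0_iff[OF zero_closed] by simp
    then show ?thesis using pos by simp
  qed
  have le: "r * norm1 x0 \<le> norm1 (rsmul r x0)" for r
    using mult_right_mono[OF abs_ge_self norm1_nonneg[OF x0(1)]] norm1_rsmul[OF x0(1)] by simp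
  show ?thesis
    unfolding hb_graph_def
    using rsmul_closed[OF x0(1)] inj le rsmul_add_left[OF x0(1)]
      rsmul_rsmul[OF x0(1)] rsmul_one[OF x0(1)]
    by (auto simp: algebra_simps) metis
qed

lemma hb_graph_Union_chain:
  assumes C: "C \<in> chains {G. hb_graph x0 G}" and "C \<noteq> {}"
  shows "hb_graph x0 (\<Union>C)"
proof -
  have good: "\<And>G. G \<in> C \<Longrightarrow> hb_graph x0 G" using C unfolding chains_def
    by blast
  have common: "\<exists>G\<in>C. p \<in> G \<and> q \<in> G" if "p \<in> \<Union>C" "q \<in> \<Union>C" for p q
    using that C unfolding chains_def chain_subset_def by blast
  show ?thesis
    unfolding hb_graph_def
  proof (intro conjI allI impI)
    show "fst ` \<Union>C \<subseteq> car" using good hb_graph_carrier by fastforce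
    show "a = b" if "(y, a) \<in> \<Union>C" "(y, b) \<in> \<Union>C" for y a b
      using common[OF that] good hb_graph_unique by blast
    show "(vadd y w, a + b) \<in> \<Union>C" if "(y, a) \<in> \<Union>C" "(w, b) \<in> \<Union>C" for y a w b
      using common[OF that] good hb_graph_add by blast
    show "(rsmul r y, r * a) \<in> \<Union>C" if "(y, a) \<in> \<Union>C" for r y a
      using that good hb_graph_rsmul by blast
    show "a \<le> norm1 y" if "(y, a) \<in> \<Union>C" for y a
      using that good hb_graph_le_norm1 by blast
    show "(x0, norm1 x0) \<in> \<Union>C" using \<open>C \<noteq> {}\<close> good hb_graph_base
      by blast
  qed
qed

lemma hb_extension_constant:
  assumes M: "hb_graph x0 M" and x0: "x0 \<in> car" and y: "y \<in> car"
  obtains c where "\<And>m a. (m, a) \<in> M \<Longrightarrow> a - norm1 (vadd m (rsmul (-1) y)) \<le> c"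
    and "\<And>m a. (m, a) \<in> M \<Longrightarrow> c \<le> norm1 (vadd m y) - a"
proof -
  have key: "a1 - norm1 (vadd m1 (rsmul (-1) y)) \<le> norm1 (vadd m2 y) - a2"
    if h1: "(m1, a1) \<in> M" and h2: "(m2, a2) \<in> M" for m1 a1 m2 a2
  proof -
    have m1: "m1 \<in> car" and m2: "m2 \<in> car" using hb_graph_carrier[OF M] h1 h2 by auto
    have "vadd (vadd m1 (rsmul (-1) y)) (vadd m2 y) = vadd (vadd m1 m2) (vadd (rsmul (-1) y) y)"
      by (rule add_add_swap[OF m1 rsmul_closed[OF y] m2 y])
    also have "\<dots> = vadd m1 m2"
      using add_rsmul_minus_one[OF y] add_commute[OF y rsmul_closed[OF y]]
        add_zero_right add_closed m1 m2
      by metis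
    finally have "a1 + a2 \<le> norm1 (vadd (vadd m1 (rsmul (-1) y)) (vadd m2 y))"
      using hb_graph_le_norm1[OF M hb_graph_add[OF M h1 h2]] by simp
    also have "\<dots> \<le> norm1 (vadd m1 (rsmul (-1) y)) + norm1 (vadd m2 y)"
      using m1 m2 y by (meson norm1_triangle add_closed rsmul_closed)
    finally show ?thesis by simp
  qed
  let ?L = "{a - norm1 (vadd m (rsmul (-1) y)) | m a. (m, a) \<in> M}"
  have ne: "?L \<noteq> {}" using hb_graph_zero[OF M x0] by blast
  have bdd: "bdd_above ?L" using key[OF _ hb_graph_zero[OF M x0]] unfolding bdd_above_def by blast
  show ?thesis
  proof
    show "a - norm1 (vadd m (rsmul (-1) y)) \<le> Sup ?L" if "(m, a) \<in> M" for m a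
      using that by (intro cSup_upper[OF _ bdd]) blast
    show "Sup ?L \<le> norm1 (vadd m y) - a" if "(m, a) \<in> M" for m a
      using key[OF _ that] by (intro cSup_least[OF ne]) blast
  qed
qed

context
  fixes x0 y M c
  assumes M: "hb_graph x0 M" and y: "y \<in> car" "y \<notin> fst ` M"
    and c_lower: "\<And>m a. (m, a) \<in> M \<Longrightarrow> a - norm1 (vadd m (rsmul (-1) y)) \<le> c"
    and c_upper: "\<And>m a. (m, a) \<in> M \<Longrightarrow> c \<le> norm1 (vadd m y) - a"
begin

definition hb_ext :: "('a \<times> real) set" where
  "hb_ext = {(vadd m (rsmul t y), a + t * c) | m a t. (m, a) \<in> M}"

lemma hb_extE:
  assumes "(u, b) \<in> hb_ext"
  obtains m a t where "(m, a) \<in> M" "m \<in> car" "u = vadd m (rsmul t y)" "b = a + t * c"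
  using assms hb_graph_carrier[OF M] unfolding hb_ext_def by blast

lemma hb_ext_unique:
  assumes "(u, b1) \<in> hb_ext" "(u, b2) \<in> hb_ext"
  shows "b1 = b2"
proof -
  obtain m1 a1 t1 where h1: "(m1, a1) \<in> M" "m1 \<in> car" "u = vadd m1 (rsmul t1 y)" "b1 = a1 + t1 * c"
    using assms(1) by (rule hb_extE)
  obtain m2 a2 t2 where h2: "(m2, a2) \<in> M" "m2 \<in> car" "u = vadd m2 (rsmul t2 y)" "b2 = a2 + t2 * c"
    using assms(2) by (rule hb_extE)
  have t: "t1 = t2"
  proof (rule ccontr)
    assume "t1 \<noteq> t2"
    let ?P = "vadd (rsmul (-1) m2) (rsmul (- t1) y)"
    have m2': "rsmul (-1) m2 \<in> car" by (rule rsmul_closed[OF h2(2)])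
    have "vadd u ?P = vadd (vadd m1 (rsmul (-1) m2)) (vadd (rsmul t1 y) (rsmul (- t1) y))"
      unfolding h1(3)
      by (rule add_add_swap[OF h1(2) rsmul_closed[OF y(1)] m2' rsmul_closed[OF y(1)]])
    also have "\<dots> = vadd m1 (rsmul (-1) m2)"
      using rsmul_add_left[OF y(1), of t1 "- t1"] rsmul_zero[OF y(1)]
        add_zero_right add_closed[OF h1(2) m2']
      by simp
    finally have e1: "vadd u ?P = vadd m1 (rsmul (-1) m2)" .
    have "vadd u ?P = vadd (vadd m2 (rsmul (-1) m2)) (vadd (rsmul t2 y) (rsmul (- t1) y))"
      unfolding h2(3)
      by (rule add_add_swap[OF h2(2) rsmul_closed[OF y(1)] m2' rsmul_closed[OF y(1)]])
    also have "\<dots> = rsmul (t2 - t1) y"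
      using add_rsmul_minus_one[OF h2(2)] rsmul_add_left[OF y(1), of t2 "- t1"]
        add_zero_left[OF rsmul_closed[OF y(1)]] by simp
    finally have "rsmul (1 / (t2 - t1)) (vadd m1 (rsmul (-1) m2)) = y"
      using e1 rsmul_rsmul[OF y(1)] rsmul_one[OF y(1)] \<open>t1 \<noteq> t2\<close> by simp
    moreover have "(rsmul (1 / (t2 - t1)) (vadd m1 (rsmul (-1) m2)),
        (1 / (t2 - t1)) * (a1 + (-1) * a2)) \<in> M"
      using M h1(1) h2(1) by (intro hb_graph_rsmul hb_graph_add) auto
    ultimately show False using y(2) by force
  qed
  then have "vadd (rsmul t1 y) m1 = vadd (rsmul t1 y) m2"
    using h1(2,3) h2(2,3) add_commute rsmul_closed[OF y(1)] by metis
  then have "m1 = m2" by (rule add_left_cancel[OF rsmul_closed[OF y(1)] h1(2) h2(2)])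
  then show ?thesis using hb_graph_unique[OF M h1(1)] h2(1) h1(4) h2(4) t by simp
qed

lemma hb_ext_le_norm1:
  assumes "(u, b) \<in> hb_ext"
  shows "b \<le> norm1 u"
proof -
  obtain m a t where h: "(m, a) \<in> M" "m \<in> car" "u = vadd m (rsmul t y)" "b = a + t * c"
    using assms by (rule hb_extE)
  consider "t = 0" | "t > 0" | "t < 0" by linarith
  then show ?thesis
  proof cases
    case 1
    then show ?thesis using h hb_graph_le_norm1[OF M h(1)] rsmul_zero[OF y(1)] add_zero_right
      by simp
  next
    case 2
    let ?m = "rsmul (1 / t) m"
    have "c \<le> norm1 (vadd ?m y) - a / t"
      using c_upper[OF hb_graph_rsmul[OF M h(1), of "1 / t"]] by simp
    moreover have "u = rsmul t (vadd ?m y)"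
      using h(3) rsmul_add_right[OF rsmul_closed[OF h(2)] y(1)] rsmul_rsmul[OF h(2)]
        rsmul_one[OF h(2)] 2
      by simp
    ultimately show ?thesis
      using h(4) 2 norm1_rsmul[OF add_closed[OF rsmul_closed[OF h(2)] y(1)], of t]
      by (simp add: field_simps)
  next
    case 3
    let ?m = "rsmul (- 1 / t) m"
    have "- a / t - norm1 (vadd ?m (rsmul (-1) y)) \<le> c"
      using c_lower[OF hb_graph_rsmul[OF M h(1), of "- 1 / t"]] by simp
    moreover have "u = rsmul (- t) (vadd ?m (rsmul (-1) y))"
      using h(3) rsmul_add_right[OF rsmul_closed[OF h(2)] rsmul_closed[OF y(1)]]
        rsmul_rsmul[OF h(2)]
        rsmul_rsmul[OF y(1)] rsmul_one[OF h(2)] 3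
      by simp
    ultimately show ?thesis
      using h(4) 3
        norm1_rsmul[OF add_closed[OF rsmul_closed[OF h(2)] rsmul_closed[OF y(1)]], of "- t"]
      by (simp add: field_simps)
  qed
qed

lemma hb_graph_hb_ext: "hb_graph x0 hb_ext"
  unfolding hb_graph_def
proof (intro conjI allI impI)
  show "fst ` hb_ext \<subseteq> car"
    using add_closed rsmul_closed[OF y(1)] by (force elim: hb_extE)
  show "(vadd u1 u2, b1 + b2) \<in> hb_ext"
      if u: "(u1, b1) \<in> hb_ext" "(u2, b2) \<in> hb_ext" for u1 b1 u2 b2
  proof -
    obtain m1 a1 t1 where h1: "(m1, a1) \<in> M" "m1 \<in> car"
        "u1 = vadd m1 (rsmul t1 y)" "b1 = a1 + t1 * c"
      using u(1) by (rule hb_extE)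
    obtain m2 a2 t2 where h2: "(m2, a2) \<in> M" "m2 \<in> car"
        "u2 = vadd m2 (rsmul t2 y)" "b2 = a2 + t2 * c"
      using u(2) by (rule hb_extE)
    have "vadd u1 u2 = vadd (vadd m1 m2) (rsmul (t1 + t2) y)"
      using h1(3) h2(3) add_add_swap[OF h1(2) rsmul_closed[OF y(1)] h2(2) rsmul_closed[OF y(1)]]
        rsmul_add_left[OF y(1)] by simp
    moreover have "b1 + b2 = (a1 + a2) + (t1 + t2) * c" using h1(4) h2(4)
      by (simp add: algebra_simps)
    ultimately show ?thesis using hb_graph_add[OF M h1(1) h2(1)] unfolding hb_ext_def by blast
  qed
  show "(rsmul r u, r * b) \<in> hb_ext" if u: "(u, b) \<in> hb_ext" for r u b
  proof -
    obtain m a t where h: "(m, a) \<in> M" "m \<in> car" "u = vadd m (rsmul t y)" "b = a + t * c"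
      using u by (rule hb_extE)
    have "rsmul r u = vadd (rsmul r m) (rsmul (r * t) y)"
      using h(3) rsmul_add_right[OF h(2) rsmul_closed[OF y(1)]] rsmul_rsmul[OF y(1)] by simp
    moreover have "r * b = r * a + (r * t) * c" using h(4) by (simp add: algebra_simps)
    ultimately show ?thesis using hb_graph_rsmul[OF M h(1)] unfolding hb_ext_def by blast
  qed
  have "(x0, norm1 x0) \<in> M" by (rule hb_graph_base[OF M])
  moreover have "x0 = vadd x0 (rsmul 0 y)"
    using rsmul_zero[OF y(1)] add_zero_right hb_graph_carrier[OF M] calculation by simp
  ultimately show "(x0, norm1 x0) \<in> hb_ext" unfolding hb_ext_def by force
qed (auto intro: hb_ext_unique hb_ext_le_norm1)

lemma hb_ext_extends: "M \<subseteq> hb_ext" and hb_ext_domain: "y \<in> fst ` hb_ext"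
proof -
  show "M \<subseteq> hb_ext"
  proof
    fix p assume "p \<in> M"
    moreover obtain m a where "p = (m, a)" by fastforce
    moreover have "m = vadd m (rsmul 0 y)"
      using calculation rsmul_zero[OF y(1)] add_zero_right hb_graph_carrier[OF M] by simp
    ultimately show "p \<in> hb_ext" unfolding hb_ext_def by force
  qed
  have "(vzero, 0) \<in> M"
    using hb_graph_zero[OF M] hb_graph_carrier[OF M hb_graph_base[OF M]] by blast
  moreover have "y = vadd vzero (rsmul 1 y)" using rsmul_one[OF y(1)] add_zero_left[OF y(1)] by simp
  ultimately show "y \<in> fst ` hb_ext" unfolding hb_ext_def by force
qed

end

lemma hb_graph_extend:
  assumes M: "hb_graph x0 M" and x0: "x0 \<in> car" and y: "y \<in> car" "y \<notin> fst ` M"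
  obtains M' where "hb_graph x0 M'" "M \<subseteq> M'" "y \<in> fst ` M'"
proof -
  obtain c where "\<And>m a. (m, a) \<in> M \<Longrightarrow> a - norm1 (vadd m (rsmul (-1) y)) \<le> c"
    and "\<And>m a. (m, a) \<in> M \<Longrightarrow> c \<le> norm1 (vadd m y) - a"
    using hb_extension_constant[OF M x0 y(1)] by blast
  from hb_graph_hb_ext[OF M y this] hb_ext_extends[OF M y this] hb_ext_domain[OF M y this]
  show thesis by (rule that)
qed

lemma exists_total_hb_graph:
  assumes x0: "x0 \<in> car" "x0 \<noteq> vzero"
  obtains M where "hb_graph x0 M" "car \<subseteq> fst ` M"
proof -
  have "\<forall>C\<in>chains {G. hb_graph x0 G}. \<exists>U\<in>{G. hb_graph x0 G}. \<forall>G\<in>C. G \<subseteq> U"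
  proof
    fix C assume C: "C \<in> chains {G. hb_graph x0 G}"
    show "\<exists>U\<in>{G. hb_graph x0 G}. \<forall>G\<in>C. G \<subseteq> U"
    proof (cases "C = {}")
      case True
      then show ?thesis using hb_graph_line[OF x0] by blast
    next
      case False
      then show ?thesis using hb_graph_Union_chain[OF C] by blast
    qed
  qed
  then obtain M where M: "hb_graph x0 M" and max: "\<And>G. hb_graph x0 G \<Longrightarrow> M \<subseteq> G \<Longrightarrow> G = M"
    using Zorn_Lemma2[of "{G. hb_graph x0 G}"] by auto
  have "y \<in> fst ` M" if y: "y \<in> car" for y
  proof (rule ccontr)
    assume "y \<notin> fst ` M"
    then obtain M' where "hb_graph x0 M'" "M \<subseteq> M'" "y \<in> fst ` M'"
      using hb_graph_extend[OF M x0(1) y] by blast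
    then show False using max \<open>y \<notin> fst ` M\<close> by blast
  qed
  then show thesis using M that by blast
qed

lemma hb_real:
  assumes x0: "x0 \<in> car" "x0 \<noteq> vzero"
  obtains g where "\<And>x y. x \<in> car \<Longrightarrow> y \<in> car \<Longrightarrow> g (vadd x y) = g x + g y"
    and "\<And>r x. x \<in> car \<Longrightarrow> g (rsmul r x) = r * g x"
    and "\<And>x. x \<in> car \<Longrightarrow> g x \<le> norm1 x"
    and "g x0 = norm1 x0"
proof -
  obtain M where M: "hb_graph x0 M" and total: "car \<subseteq> fst ` M"
    using exists_total_hb_graph[OF x0] by blast
  define g where "g y = (THE a. (y, a) \<in> M)" for y
  have g: "g y = a" if ya: "(y, a) \<in> M" for y a
    unfolding g_def
    by (rule the_equality[where P = "\<lambda>a. (y, a) \<in> M", OF ya],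
      rule sym, rule hb_graph_unique[OF M ya])
  have graph: "(y, g y) \<in> M" if y: "y \<in> car" for y
  proof -
    obtain a where "(y, a) \<in> M" using total y by force
    then show ?thesis using g by simp
  qed
  show thesis
  proof
    show "g (vadd x y) = g x + g y" if "x \<in> car" "y \<in> car" for x y
      by (rule g[OF hb_graph_add[OF M graph[OF that(1)] graph[OF that(2)]]])
    show "g (rsmul r x) = r * g x" if "x \<in> car" for r x
      by (rule g[OF hb_graph_rsmul[OF M graph[OF that]]])
    show "g x \<le> norm1 x" if "x \<in> car" for x
      by (rule hb_graph_le_norm1[OF M graph[OF that]])
    show "g x0 = norm1 x0" by (rule g[OF hb_graph_base[OF M]])
  qed
qed

lemma dual_of_real_functional:
  assumes g_add: "\<And>x y. x \<in> car \<Longrightarrow> y \<in> car \<Longrightarrow> g (vadd x y) = g x + g y"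
    and g_rsmul: "\<And>r x. x \<in> car \<Longrightarrow> g (rsmul r x) = r * g x"
    and g_le: "\<And>x. x \<in> car \<Longrightarrow> g x \<le> norm1 x"
  obtains f where "f \<in> dual_carrier V" "\<And>x. x \<in> car \<Longrightarrow> Re (f x) = g x"
proof -
  have g_abs: "\<bar>g x\<bar> \<le> norm1 x" if x: "x \<in> car" for x
    using g_le[OF x] g_le[OF rsmul_closed[OF x, of "-1"]]
      g_rsmul[OF x, of "-1"] norm1_rsmul[OF x, of "-1"]
    by simp
  have g_smul: "g (vsmul c x) = Re c * g x + Im c * g (vsmul \<i> x)" if x: "x \<in> car" for c x
  proof -
    have "c = complex_of_real (Re c) + complex_of_real (Im c) * \<i>"
      by (simp add: complex_eq_iff)
    then have "vsmul c x = vsmul (complex_of_real (Re c) + complex_of_real (Im c) * \<i>) x"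
      by simp
    also have "\<dots> = vadd (rsmul (Re c) x) (rsmul (Im c) (vsmul \<i> x))"
      unfolding rsmul_def using x by (simp add: smul_add_left smul_smul)
    finally show ?thesis using x by (simp add: g_add g_rsmul rsmul_closed smul_closed)
  qed
  define f where "f x = (if x \<in> car then complex_of_real (g x)
      - \<i> * complex_of_real (g (vsmul \<i> x)) else 0)"
    for x
  have "lin_fun V f"
    unfolding lin_fun_def
  proof (intro conjI ballI allI)
    show "f (vadd x y) = f x + f y" if "x \<in> car" "y \<in> car" for x y
    proof -
      have "g (vsmul \<i> (vadd x y)) = g (vsmul \<i> x) + g (vsmul \<i> y)"
        using that by (simp add: smul_add_right g_add smul_closed)
      moreover have "g (vadd x y) = g x + g y" using that by (rule g_add)
      ultimately show ?thesis
        using that add_closed[OF that] unfolding f_def by (simp add: ring_distribs)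
    qed
    show "f (vsmul c x) = c * f x" if x: "x \<in> car" for c x
    proof -
      have "g (vsmul \<i> (vsmul c x)) = - Im c * g x + Re c * g (vsmul \<i> x)"
        using g_smul[OF x, of "\<i> * c"] by (simp add: smul_smul[OF x])
      moreover note g_smul[OF x, of c]
      ultimately show ?thesis using x smul_closed[OF x] by (simp add: f_def complex_eq_iff)
    qed
  qed
  moreover have "cmod (f x) \<le> 2 * norm1 x" if x: "x \<in> car" for x
  proof -
    have "cmod (f x) \<le> \<bar>g x\<bar> + \<bar>g (vsmul \<i> x)\<bar>"
      using x norm_triangle_ineq4[of "complex_of_real (g x)" "\<i> * complex_of_real (g (vsmul \<i> x))"]
      by (simp add: f_def norm_mult)
    also have "\<dots> \<le> norm1 x + norm1 (vsmul \<i> x)" using x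
      by (intro add_mono g_abs smul_closed)
    finally show ?thesis using x by (simp add: norm1_smul)
  qed
  ultimately have "f \<in> dual_carrier V" unfolding dual_carrier_def norm1_def
    by (auto simp: f_def)
  moreover have "Re (f x) = g x" if "x \<in> car" for x using that by (simp add: f_def)
  ultimately show thesis by (rule that)
qed

lemma exists_dual_nonzero:
  assumes x0: "x0 \<in> car" "x0 \<noteq> vzero"
  obtains f where "f \<in> dual_carrier V" "f x0 \<noteq> 0"
proof -
  obtain g where g: "\<And>x y. x \<in> car \<Longrightarrow> y \<in> car \<Longrightarrow> g (vadd x y) = g x + g y"
    "\<And>r x. x \<in> car \<Longrightarrow> g (rsmul r x) = r * g x" "\<And>x. x \<in> car \<Longrightarrow> g x \<le> norm1 x"
    and g_x0: "g x0 = norm1 x0"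
    using hb_real[OF x0] by blast
  obtain f where f: "f \<in> dual_carrier V" and re: "\<And>x. x \<in> car \<Longrightarrow> Re (f x) = g x"
    using dual_of_real_functional[OF g] by blast
  have "Re (f x0) \<noteq> 0" using re[OF x0(1)] g_x0 norm1_eq_0_iff[OF x0(1)] x0(2) by simp
  then show thesis using f that by fastforce
qed

end

section \<open>The approximating maps\<close>

lemma vsumN_cong:
  "(\<And>k. k < n \<Longrightarrow> f k = g k) \<Longrightarrow> vsumN V f n = vsumN V g n"
  by (induction n) auto

lemma lincomb_closed:
  "pre_operator_space V \<Longrightarrow> set zs \<subseteq> os_carrier V \<Longrightarrow> lincomb V t zs \<in> os_carrier V"
  unfolding lincomb_def by (auto intro!: vsumN_closed pre_os_smul_closed)

lemma lin_fun_lincomb: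
  assumes V: "pre_operator_space V" and b: "lin_fun V b" and zs: "set zs \<subseteq> os_carrier V"
  shows "b (lincomb V t zs) = (\<Sum>k<length zs. t ! k * b (zs ! k))"
proof -
  have z: "zs ! k \<in> os_carrier V" if "k < length zs" for k using zs that nth_mem by blast
  have "b (lincomb V t zs) = (\<Sum>k<length zs. b (os_smul V (t ! k) (zs ! k)))"
    unfolding lincomb_def using z by (intro lin_fun_vsumN[OF V b] pre_os_smul_closed[OF V]) simp
  also have "\<dots> = (\<Sum>k<length zs. t ! k * b (zs ! k))"
    using z by (intro sum.cong refl lin_fun_smul[OF b]) simp
  finally show ?thesis .
qed

lemma lincomb_snoc:
  assumes "length t = length zs"
  shows "lincomb V (t @ [c]) (zs @ [w]) = os_add V (lincomb V t zs) (os_smul V c w)"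
proof -
  have "vsumN V (\<lambda>k. os_smul V ((t @ [c]) ! k) ((zs @ [w]) ! k)) (length zs)
      = vsumN V (\<lambda>k. os_smul V (t ! k) (zs ! k)) (length zs)"
    using assms by (intro vsumN_cong) (simp add: nth_append)
  then show ?thesis using assms by (simp add: lincomb_def nth_append)
qed

text \<open>\<open>zs\<close> spans \<open>V\<close> modulo the common kernel of the functionals \<open>bs\<close>.\<close>

definition spans_modulo :: "'a opsp \<Rightarrow> ('a \<Rightarrow> complex) list \<Rightarrow> 'a list \<Rightarrow> bool" where
  "spans_modulo V bs zs \<longleftrightarrow> set zs \<subseteq> os_carrier V \<and>
     (\<forall>z\<in>os_carrier V. \<exists>t. length t = length zs \<and> (\<forall>b\<in>set bs. b z = b (lincomb V t zs)))"

lemma lin_fun_diff: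
  assumes "pre_operator_space V" "lin_fun V b" "z \<in> os_carrier V" "u \<in> os_carrier V"
  shows "b (os_add V z (os_smul V (-1) u)) = b z - b u"
  using assms pre_os_smul_closed[OF assms(1) assms(4)] by (simp add: lin_fun_def)

lemma spans_modulo_Cons_new:
  assumes V: "pre_operator_space V" and b: "lin_fun V b" and bs: "\<forall>b'\<in>set bs. lin_fun V b'"
    and zs: "spans_modulo V bs zs"
    and w: "w \<in> os_carrier V" "\<forall>b'\<in>set bs. b' w = 0" "b w \<noteq> 0"
  shows "spans_modulo V (b # bs) (zs @ [w])"
  unfolding spans_modulo_def
proof (intro conjI ballI)
  show "set (zs @ [w]) \<subseteq> os_carrier V" using zs w(1) unfolding spans_modulo_def by auto
  fix z assume z: "z \<in> os_carrier V"
  obtain t where t: "length t = length zs" "\<And>b'. b' \<in> set bs \<Longrightarrow> b' z = b' (lincomb V t zs)"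
    using zs z unfolding spans_modulo_def by blast
  let ?u = "lincomb V t zs"
  let ?c = "(b z - b ?u) / b w"
  have u: "?u \<in> os_carrier V" using lincomb_closed[OF V] zs unfolding spans_modulo_def by blast
  have new: "b' (lincomb V (t @ [?c]) (zs @ [w])) = b' ?u + ?c * b' w" if "lin_fun V b'" for b'
    using that u w(1) pre_os_smul_closed[OF V] by (simp add: lincomb_snoc[OF t(1)] lin_fun_def)
  have "b z = b (lincomb V (t @ [?c]) (zs @ [w]))" using new[OF b] w(3) by simp
  moreover have "b' z = b' (lincomb V (t @ [?c]) (zs @ [w]))" if b': "b' \<in> set bs" for b'
    using new[of b'] bs w(2) t(2)[OF b'] b' by simp
  ultimately show "\<exists>t'. length t' = length (zs @ [w]) \<and>
      (\<forall>b'\<in>set (b # bs). b' z = b' (lincomb V t' (zs @ [w])))"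
    using t(1) by (intro exI[of _ "t @ [?c]"]) auto
qed

lemma spans_modulo_Cons_old:
  assumes V: "pre_operator_space V" and b: "lin_fun V b" and bs: "\<forall>b'\<in>set bs. lin_fun V b'"
    and zs: "spans_modulo V bs zs"
    and ker: "\<And>w. w \<in> os_carrier V \<Longrightarrow> \<forall>b'\<in>set bs. b' w = 0 \<Longrightarrow> b w = 0"
  shows "spans_modulo V (b # bs) zs"
  unfolding spans_modulo_def
proof (intro conjI ballI)
  show "set zs \<subseteq> os_carrier V" using zs unfolding spans_modulo_def by blast
  fix z assume z: "z \<in> os_carrier V"
  obtain t where t: "length t = length zs" "\<And>b'. b' \<in> set bs \<Longrightarrow> b' z = b' (lincomb V t zs)"
    using zs z unfolding spans_modulo_def by blast
  let ?u = "lincomb V t zs"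
  have u: "?u \<in> os_carrier V" using lincomb_closed[OF V] zs unfolding spans_modulo_def by blast
  have "os_add V z (os_smul V (-1) ?u) \<in> os_carrier V"
    using z u by (intro pre_os_add_closed[OF V] pre_os_smul_closed[OF V])
  moreover have "\<forall>b'\<in>set bs. b' (os_add V z (os_smul V (-1) ?u)) = 0"
    using lin_fun_diff[OF V _ z u] bs t(2) by fastforce
  ultimately have "b z = b ?u" using ker lin_fun_diff[OF V b z u] by fastforce
  then show "\<exists>t. length t = length zs \<and> (\<forall>b'\<in>set (b # bs). b' z = b' (lincomb V t zs))"
    using t by auto
qed

lemma exists_spans_modulo:
  assumes V: "pre_operator_space V" and bs: "\<forall>b\<in>set bs. lin_fun V b"
  shows "\<exists>zs. spans_modulo V bs zs"
  using bs
proof (induction bs)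
  case Nil
  show ?case by (rule exI[of _ "[]"]) (simp add: spans_modulo_def)
next
  case (Cons b bs)
  then obtain zs where zs: "spans_modulo V bs zs" by auto
  have b: "lin_fun V b" and bs: "\<forall>b'\<in>set bs. lin_fun V b'" using Cons.prems by auto
  show ?case
  proof (cases "\<exists>w\<in>os_carrier V. (\<forall>b'\<in>set bs. b' w = 0) \<and> b w \<noteq> 0")
    case True
    then show ?thesis using spans_modulo_Cons_new[OF V b bs zs] by blast
  next
    case False
    then show ?thesis using spans_modulo_Cons_old[OF V b bs zs] by blast
  qed
qed

abbreviation bidual :: "'a opsp \<Rightarrow> (('a \<Rightarrow> complex) \<Rightarrow> complex) opsp" where
  "bidual V \<equiv> dual (dual V)"

lemma pre_operator_space_duals:
  assumes "operator_space E"
  shows "pre_operator_space E" "pre_operator_space (dual E)" "pre_operator_space (bidual E)"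
    "pre_operator_space (dual (bidual E))"
  using assms by (simp_all add: operator_space_imp_pre_operator_space pre_operator_space_dual)

lemma
  assumes "lin_map V W \<phi>" "x \<in> os_carrier V"
  shows lin_map_closed: "\<phi> x \<in> os_carrier W"
    and lin_map_add: "y \<in> os_carrier V \<Longrightarrow> \<phi> (os_add V x y) = os_add W (\<phi> x) (\<phi> y)"
    and lin_map_smul: "\<phi> (os_smul V c x) = os_smul W c (\<phi> x)"
  using assms unfolding lin_map_def by blast+

text \<open>For \<open>\<psi> : E' \<rightarrow> E'''\<close>, \<open>bidual_adjoint E \<psi>\<close> is the adjoint \<open>E'''' \<rightarrow> E''\<close> of \<open>\<psi>\<close>
  restricted to \<open>E''\<close>; composing it with the canonical embedding of \<open>E\<close> gives the approximating
  maps \<open>E \<rightarrow> E''\<close>.\<close>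

definition bidual_adjoint ::
  "'a opsp \<Rightarrow> (('a \<Rightarrow> complex) \<Rightarrow> (('a \<Rightarrow> complex) \<Rightarrow> complex) \<Rightarrow> complex) \<Rightarrow> (('a \<Rightarrow> complex) \<Rightarrow> complex)
    \<Rightarrow> ('a \<Rightarrow> complex) \<Rightarrow> complex" where
  "bidual_adjoint E \<psi> z = (\<lambda>f. if f \<in> dual_carrier E then \<psi> f z else 0)"

definition predual_adjoint ::
  "'a opsp \<Rightarrow> (('a \<Rightarrow> complex) \<Rightarrow> (('a \<Rightarrow> complex) \<Rightarrow> complex) \<Rightarrow> complex)
      \<Rightarrow> 'a \<Rightarrow> ('a \<Rightarrow> complex) \<Rightarrow> complex" where
  "predual_adjoint E \<psi> x = bidual_adjoint E \<psi> (kappa E x)"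

lemma predual_adjoint_apply:
  "f \<in> dual_carrier E \<Longrightarrow> predual_adjoint E \<psi> x f = \<psi> f (kappa E x)"
  by (simp add: predual_adjoint_def bidual_adjoint_def)

lemma bidual_adjoint_in_dual_carrier:
  assumes E: "operator_space E" and L: "lin_map (dual E) (dual (bidual E)) \<psi>"
    and CB: "cb_le (dual E) (dual (bidual E)) C \<psi>" and z: "z \<in> dual_carrier (dual E)"
  shows "bidual_adjoint E \<psi> z \<in> dual_carrier (dual E)"
proof -
  have "lin_fun (dual E) (bidual_adjoint E \<psi> z)"
    unfolding lin_fun_def
  proof (intro conjI ballI allI)
    fix f g assume f: "f \<in> os_carrier (dual E)" and g: "g \<in> os_carrier (dual E)"
    show "bidual_adjoint E \<psi> z (os_add (dual E) f g)
        = bidual_adjoint E \<psi> z f + bidual_adjoint E \<psi> z g"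
      using lin_map_add[OF L f g] f g by (simp add: bidual_adjoint_def dual_carrier_add)
  next
    fix c f assume f: "f \<in> os_carrier (dual E)"
    show "bidual_adjoint E \<psi> z (os_smul (dual E) c f) = c * bidual_adjoint E \<psi> z f"
      using lin_map_smul[OF L f] f by (simp add: bidual_adjoint_def dual_carrier_smul)
  qed
  moreover have "cmod (bidual_adjoint E \<psi> z f)
      \<le> (C * dual_mnorm (dual E) 1 (\<lambda>_ _. z)) * dual_mnorm E 1 (\<lambda>_ _. f)"
    if f: "f \<in> dual_carrier E" for f
  proof -
    have "cmod (\<psi> f z) \<le> dual_mnorm (bidual E) 1 (\<lambda>_ _. \<psi> f) * dual_mnorm (dual E) 1 (\<lambda>_ _. z)"
      using norm_dual_apply_le[of "bidual E" "\<psi> f" z] pre_operator_space_duals[OF E]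
        lin_map_closed[OF L] f z
      by simp
    also have "\<dots> \<le> (C * dual_mnorm E 1 (\<lambda>_ _. f)) * dual_mnorm (dual E) 1 (\<lambda>_ _. z)"
      using CB f z pre_operator_space_duals[OF E] unfolding cb_le_def
      by (intro mult_right_mono) (auto simp: mat_in_def intro: dual_mnorm_nonneg)
    finally show ?thesis using f by (simp add: bidual_adjoint_def mult_ac)
  qed
  ultimately show ?thesis
    unfolding dual_carrier_def[of "dual E"]
    by (auto simp: bidual_adjoint_def intro!: exI[of _ "C * dual_mnorm (dual E) 1 (\<lambda>_ _. z)"])
qed

lemma lin_map_predual_adjoint:
  assumes E: "operator_space E" and L: "lin_map (dual E) (dual (bidual E)) \<psi>"
    and CB: "cb_le (dual E) (dual (bidual E)) C \<psi>"
  shows "lin_map E (bidual E) (predual_adjoint E \<psi>)"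
  unfolding lin_map_def
proof (intro conjI ballI allI)
  have pre: "pre_operator_space E" using E by (rule operator_space_imp_pre_operator_space)
  have lin: "lin_fun (bidual E) (\<psi> f)" if "f \<in> dual_carrier E" for f
    using lin_map_closed[OF L] that by (simp add: dual_carrier_lin_fun)
  fix x assume x: "x \<in> os_carrier E"
  have kx: "kappa E x \<in> os_carrier (bidual E)" using kappa_in_dual_carrier[OF pre x] by simp
  show "predual_adjoint E \<psi> x \<in> os_carrier (bidual E)"
    unfolding predual_adjoint_def using bidual_adjoint_in_dual_carrier[OF E L CB] kx by simp
  show "predual_adjoint E \<psi> (os_smul E c x) = os_smul (bidual E) c (predual_adjoint E \<psi> x)" for c
    unfolding predual_adjoint_def bidual_adjoint_def kappa_smul[OF x]
    using kx lin by (auto simp: fun_eq_iff lin_fun_def)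
  fix y assume y: "y \<in> os_carrier E"
  have ky: "kappa E y \<in> os_carrier (bidual E)" using kappa_in_dual_carrier[OF pre y] by simp
  show "predual_adjoint E \<psi> (os_add E x y)
      = os_add (bidual E) (predual_adjoint E \<psi> x) (predual_adjoint E \<psi> y)"
    unfolding predual_adjoint_def bidual_adjoint_def kappa_add[OF x y]
    using kx ky lin by (auto simp: fun_eq_iff lin_fun_def)
qed

lemma finite_rank_predual_adjoint:
  assumes E: "operator_space E" and L: "lin_map (dual E) (dual (bidual E)) \<psi>"
    and CB: "cb_le (dual E) (dual (bidual E)) C \<psi>"
    and FR: "finite_rank (dual E) (dual (bidual E)) \<psi>"
  shows "finite_rank E (bidual E) (predual_adjoint E \<psi>)"
proof -
  note pre = pre_operator_space_duals[OF E]
  obtain bs where bs: "set bs \<subseteq> dual_carrier (bidual E)"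
    and rep: "\<And>f. f \<in> dual_carrier E \<Longrightarrow> \<exists>cs. \<psi> f = (\<lambda>w. \<Sum>k<length bs. cs ! k * (bs ! k) w)"
    using FR unfolding finite_rank_def lincomb_dual dual_simps by metis
  obtain zs where zs: "set zs \<subseteq> dual_carrier (dual E)"
    and agree: "\<And>z. z \<in> dual_carrier (dual E) \<Longrightarrow>
      \<exists>t. length t = length zs \<and> (\<forall>b\<in>set bs. b z = b (lincomb (bidual E) t zs))"
    using exists_spans_modulo[OF pre(3), of bs] bs dual_carrier_lin_fun
    unfolding spans_modulo_def by fastforce
  show ?thesis
    unfolding finite_rank_def
  proof (intro exI[of _ "map (bidual_adjoint E \<psi>) zs"] conjI ballI)
    show "set (map (bidual_adjoint E \<psi>) zs) \<subseteq> os_carrier (bidual E)"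
      using bidual_adjoint_in_dual_carrier[OF E L CB] zs by auto
    fix x assume x: "x \<in> os_carrier E"
    obtain t where t: "length t = length zs"
      and tb: "\<And>b. b \<in> set bs \<Longrightarrow> b (kappa E x) = b (lincomb (bidual E) t zs)"
      using agree[OF kappa_in_dual_carrier[OF pre(1) x]] by blast
    have "predual_adjoint E \<psi> x f = (\<Sum>j<length zs. t ! j * bidual_adjoint E \<psi> (zs ! j) f)" for f
    proof (cases "f \<in> dual_carrier E")
      case True
      obtain cs where cs: "\<psi> f = (\<lambda>w. \<Sum>k<length bs. cs ! k * (bs ! k) w)"
        using rep[OF True] by blast
      have "\<psi> f (kappa E x) = \<psi> f (lincomb (bidual E) t zs)"
        unfolding cs by (intro sum.cong refl) (simp add: tb)
      also have "\<dots> = (\<Sum>j<length zs. t ! j * \<psi> f (zs ! j))"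
        using lin_map_closed[OF L] True zs pre(3)
        by (intro lin_fun_lincomb) (auto intro: dual_carrier_lin_fun)
      finally show ?thesis using True by (simp add: predual_adjoint_def bidual_adjoint_def)
    qed (simp add: predual_adjoint_def bidual_adjoint_def)
    then show "\<exists>cs. length cs = length (map (bidual_adjoint E \<psi>) zs) \<and>
        predual_adjoint E \<psi> x = lincomb (bidual E) cs (map (bidual_adjoint E \<psi>) zs)"
      using t by (intro exI[of _ t]) (simp add: lincomb_dual fun_eq_iff)
  qed
qed

lemma cb_le_imp_nonneg:
  assumes W: "pre_operator_space W" and L: "lin_map V W \<phi>" and CB: "cb_le V W C \<phi>"
    and v: "v \<in> os_carrier V" "0 < os_mnorm V 1 (\<lambda>_ _. v)"
  shows "0 \<le> C"
proof -
  have "0 \<le> os_mnorm W 1 (\<lambda>_ _. \<phi> v)"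
    using pre_os_mnorm_nonneg[OF W] lin_map_closed[OF L v(1)] by (simp add: mat_in_def)
  also have "\<dots> \<le> C * os_mnorm V 1 (\<lambda>_ _. v)"
    using CB v(1) unfolding cb_le_def by (auto simp: mat_in_def)
  finally show ?thesis using v(2) by (simp add: zero_le_mult_iff)
qed

lemma exists_dual_mnorm_pos:
  assumes E: "operator_space E" and x: "x \<in> os_carrier E" "x \<noteq> os_zero E"
  obtains f where "f \<in> dual_carrier E" "0 < dual_mnorm E 1 (\<lambda>_ _. f)"
proof -
  interpret opspace E by (rule opspace.intro[OF E])
  obtain f where f: "f \<in> dual_carrier E" "f x \<noteq> 0" using exists_dual_nonzero[OF x]
    by blast
  have pre: "pre_operator_space E" using E by (rule operator_space_imp_pre_operator_space)
  have "0 < cmod (f x)" using f(2) by simp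
  also have "\<dots> \<le> dual_mnorm E 1 (\<lambda>_ _. f) * os_mnorm E 1 (\<lambda>_ _. x)"
    by (rule norm_dual_apply_le[OF pre f(1) x(1)])
  finally have "0 < dual_mnorm E 1 (\<lambda>_ _. f)"
    using dual_mnorm_nonneg[OF pre, of 1 "\<lambda>_ _. f"]
      pre_os_mnorm_nonneg[OF pre, of 1 "\<lambda>_ _. x"] f(1) x(1)
    by (simp add: mat_in_def zero_less_mult_iff)
  then show thesis using f(1) that by blast
qed

lemma cmat_norm_pair_predual_adjoint_le:
  assumes E: "operator_space E" and L: "lin_map (dual E) (dual (bidual E)) \<psi>"
    and X: "mat_in E n X" and Y: "mat_in (dual E) m Y" and m: "0 < m"
  shows "cmat_norm (n * m) (n * m) (pair_mat m (\<lambda>i j. predual_adjoint E \<psi> (X i j)) Y)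
    \<le> dual_mnorm (bidual E) m (\<lambda>k l. \<psi> (Y k l)) * os_mnorm E n X"
proof -
  note pre = pre_operator_space_duals[OF E]
  let ?kX = "\<lambda>i j. kappa E (X i j)" and ?\<psi>Y = "\<lambda>k l. \<psi> (Y k l)"
  have kX: "mat_in (bidual E) n ?kX" using X kappa_in_dual_carrier[OF pre(1)]
    by (simp add: mat_in_def)
  have \<psi>Y: "mat_in (dual (bidual E)) m ?\<psi>Y" using lin_map_closed[OF L] Y
    by (simp add: mat_in_def)
  have "cmat_norm (n * m) (n * m) (pair_mat m (\<lambda>i j. predual_adjoint E \<psi> (X i j)) Y)
      = cmat_norm (n * m) (n * m) (\<lambda>p q. (\<lambda>i j k l. \<psi> (Y k l) (?kX i j))
          (p div m) (q div m) (p mod m) (q mod m))"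
    using Y m by (intro cmat_norm_cong) (simp add: mat_in_def predual_adjoint_apply)
  also have "\<dots> = cmat_norm (m * n) (m * n) (pair_mat n ?\<psi>Y ?kX)"
    by (rule cmat_norm_swap_blocks)
  also have "\<dots> \<le> dual_mnorm (bidual E) m ?\<psi>Y * dual_mnorm (dual E) n ?kX"
    using cmat_norm_pair_mat_le[OF pre(3) \<psi>Y kX] by simp
  also have "\<dots> \<le> dual_mnorm (bidual E) m ?\<psi>Y * os_mnorm E n X"
    using dual_mnorm_kappa_le[OF pre(1) X] pre_os_mnorm_nonneg[OF pre(4) \<psi>Y]
    by (intro mult_left_mono) simp_all
  finally show ?thesis .
qed

lemma cb_le_predual_adjoint:
  assumes E: "operator_space E" and L: "lin_map (dual E) (dual (bidual E)) \<psi>"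
    and CB: "cb_le (dual E) (dual (bidual E)) C \<psi>"
  shows "cb_le E (bidual E) C (predual_adjoint E \<psi>)"
  unfolding cb_le_def
proof (intro allI impI)
  fix n X assume X: "mat_in E n X"
  note pre = pre_operator_space_duals[OF E]
  have X0: "0 \<le> os_mnorm E n X" by (rule operator_space_mnorm_nonneg[OF E X])
  have C0: "0 \<le> C" if nz: "os_mnorm E n X \<noteq> 0"
  proof -
    obtain i j where ij: "i < n" "j < n" and "X i j \<noteq> os_zero E"
      using nz operator_space_mnorm_eq_0_iff[OF E X] by blast
    moreover have "X i j \<in> os_carrier E" using X ij by (simp add: mat_in_def)
    ultimately obtain f where "f \<in> dual_carrier E" "0 < dual_mnorm E 1 (\<lambda>_ _. f)"
      using exists_dual_mnorm_pos[OF E] by metis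
    then show "0 \<le> C" using cb_le_imp_nonneg[OF pre(4) L CB] by simp
  qed
  show "os_mnorm (bidual E) n (\<lambda>i j. predual_adjoint E \<psi> (X i j)) \<le> C * os_mnorm E n X"
    unfolding dual_simps
  proof (rule dual_mnorm_le)
    show "0 \<le> C * os_mnorm E n X" using C0 X0 by (cases "os_mnorm E n X = 0") auto
    fix m Y assume m: "0 < m" and Y: "mat_in (dual E) m Y" and Y1: "os_mnorm (dual E) m Y \<le> 1"
    have "dual_mnorm (bidual E) m (\<lambda>k l. \<psi> (Y k l)) * os_mnorm E n X \<le> C * os_mnorm E n X"
    proof (cases "os_mnorm E n X = 0")
      case False
      have "dual_mnorm (bidual E) m (\<lambda>k l. \<psi> (Y k l)) \<le> C * os_mnorm (dual E) m Y"
        using CB Y unfolding cb_le_def by simp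
      also have "\<dots> \<le> C" using mult_left_mono[OF Y1 C0[OF False]] by simp
      finally show ?thesis using X0 by (rule mult_right_mono)
    qed simp
    with cmat_norm_pair_predual_adjoint_le[OF E L X Y m]
    show "cmat_norm (n * m) (n * m) (pair_mat m (\<lambda>i j. predual_adjoint E \<psi> (X i j)) Y)
        \<le> C * os_mnorm E n X" by linarith
  qed
qed

theorem proposition6p11:
  fixes E :: "'a opsp" and C :: real
  assumes "operator_space E"
    and "W_CBAP (dual E) C"
  shows "W_CBAP E C"
proof -
  obtain F where F: "F \<noteq> bot"
    and maps: "\<forall>\<^sub>F \<psi> in F. lin_map (dual E) (dual (bidual E)) \<psi>
        \<and> finite_rank (dual E) (dual (bidual E)) \<psi> \<and> cb_le (dual E) (dual (bidual E)) C \<psi>"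
    and conv: "\<forall>g\<in>dual_carrier E. \<forall>z\<in>dual_carrier (dual E).
        ((\<lambda>\<psi>. \<psi> g z) \<longlongrightarrow> kappa (dual E) g z) F"
    using assms(2) unfolding W_CBAP_def by auto
  show ?thesis
    unfolding W_CBAP_def
  proof (intro exI[of _ "filtermap (predual_adjoint E) F"] conjI ballI)
    show "filtermap (predual_adjoint E) F \<noteq> bot" using F by (simp add: filtermap_bot_iff)
    show "\<forall>\<^sub>F \<phi> in filtermap (predual_adjoint E) F. lin_map E (bidual E) \<phi> \<and>
        finite_rank E (bidual E) \<phi> \<and> cb_le E (bidual E) C \<phi>"
      unfolding eventually_filtermap using maps
      by (rule eventually_mono)
        (use lin_map_predual_adjoint[OF assms(1)] finite_rank_predual_adjoint[OF assms(1)]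
           cb_le_predual_adjoint[OF assms(1)] in blast)
    fix x f assume x: "x \<in> os_carrier E" and f: "f \<in> dual_carrier E"
    have kx: "kappa E x \<in> dual_carrier (dual E)"
      using kappa_in_dual_carrier[OF operator_space_imp_pre_operator_space[OF assms(1)] x] .
    show "((\<lambda>\<phi>. \<phi> x f) \<longlongrightarrow> kappa E x f) (filtermap (predual_adjoint E) F)"
      using conv[rule_format, OF f kx] f kx
      by (simp add: filterlim_filtermap predual_adjoint_apply kappa_apply)
  qed
qed

end
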